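(* Let $B$ be a nonempty barrier of a $3$-connected cubic graph $G$, and let $H[A,B]$ be the corresponding core. A vertex $b\in B$ is $\lambda$-matchable in $G$ if and only if there exists $a\in A$ such that (i) the pair $(a,b)$ is $\lambda$-matchable in $H$, and (ii) the contraction vertex of the $B$-fragment corresponding to $a$ is $\lambda$-matchable in that $B$-fragment.
   Context: A barrier of a graph $G$ with a perfect matching is a set $S\subseteq V(G)$ such that $G-S$ has exactly $|S|$ components of odd order. For a barrier $B$ of a matching covered graph, every component of $G-B$ is odd; the core $H[A,B]$ is the bipartite graph obtained by shrinking each component of $G-B$ to a single vertex (these vertices form $A$). For a component $J$ of $G-B$, the $B$-fragment $G/\overline{V(J)}$ is obtained by shrinking $V(G)-V(J)$ to a single contraction vertex; it corresponds to the vertex of $A$ obtained from $J$. For a vertex $v$ of a cubic graph, $v$ is $\lambda$-matchable if there is a spanning subgraph in which $v$ has degree $3$ and every other vertex degree $1$. For a bipartite cubic graph, a pair $(a,b)$ from different color classes is $\lambda$-matchable if there is a spanning subgraph in which $a,b$ have degree $3$ and all other vertices degree $1$. *)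

theory Defs
  imports Main
begin

text \<open>Finite loopless multigraphs: a vertex set, an edge set, and an endpoint map
  sending each edge to a 2-element set of vertices (parallel edges allowed).\<close>

type_synonym ('v,'e) mgraph = "'v set \<times> 'e set \<times> ('e \<Rightarrow> 'v set)"

definition verts :: "('v,'e) mgraph \<Rightarrow> 'v set" where "verts G = fst G"
definition edges :: "('v,'e) mgraph \<Rightarrow> 'e set" where "edges G = fst (snd G)"
definition endpts :: "('v,'e) mgraph \<Rightarrow> 'e \<Rightarrow> 'v set" where "endpts G = snd (snd G)"

definition mgraph :: "('v,'e) mgraph \<Rightarrow> bool" where
  "mgraph G \<longleftrightarrow> finite (verts G) \<and> finite (edges G) \<and>
     (\<forall>e\<in>edges G. endpts G e \<subseteq> verts G \<and> card (endpts G e) = 2)"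

definition deg_in :: "'e set \<Rightarrow> ('v,'e) mgraph \<Rightarrow> 'v \<Rightarrow> nat" where
  "deg_in F G v = card {e\<in>F. v \<in> endpts G e}"

definition cubic :: "('v,'e) mgraph \<Rightarrow> bool" where
  "cubic G \<longleftrightarrow> mgraph G \<and> (\<forall>v\<in>verts G. deg_in (edges G) G v = 3)"

definition perfect_matching :: "('v,'e) mgraph \<Rightarrow> 'e set \<Rightarrow> bool" where
  "perfect_matching G M \<longleftrightarrow> M \<subseteq> edges G \<and> (\<forall>v\<in>verts G. deg_in M G v = 1)"

definition has_perfect_matching :: "('v,'e) mgraph \<Rightarrow> bool" where
  "has_perfect_matching G \<longleftrightarrow> (\<exists>M. perfect_matching G M)"

definition adj_minus :: "('v,'e) mgraph \<Rightarrow> 'v set \<Rightarrow> ('v \<times> 'v) set" where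
  "adj_minus G S = {(u,v). u \<in> verts G - S \<and> v \<in> verts G - S \<and>
                          (\<exists>e\<in>edges G. endpts G e = {u,v})}"

definition comp_of :: "('v,'e) mgraph \<Rightarrow> 'v set \<Rightarrow> 'v \<Rightarrow> 'v set" where
  "comp_of G S v = (adj_minus G S)\<^sup>* `` {v}"

definition components :: "('v,'e) mgraph \<Rightarrow> 'v set \<Rightarrow> 'v set set" where
  "components G S = comp_of G S ` (verts G - S)"

definition odd_components :: "('v,'e) mgraph \<Rightarrow> 'v set \<Rightarrow> 'v set set" where
  "odd_components G S = {C \<in> components G S. odd (card C)}"

definition barrier :: "('v,'e) mgraph \<Rightarrow> 'v set \<Rightarrow> bool" where
  "barrier G S \<longleftrightarrow> has_perfect_matching G \<and> S \<subseteq> verts G \<and>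
     card (odd_components G S) = card S"

definition k_connected :: "nat \<Rightarrow> ('v,'e) mgraph \<Rightarrow> bool" where
  "k_connected k G \<longleftrightarrow> card (verts G) > k \<and>
     (\<forall>S \<subseteq> verts G. card S < k \<longrightarrow> card (components G S) = 1)"

definition contract :: "('v \<Rightarrow> 'w) \<Rightarrow> ('v,'e) mgraph \<Rightarrow> ('w,'e) mgraph" where
  "contract f G = (f ` verts G, {e\<in>edges G. card (f ` endpts G e) = 2}, \<lambda>e. f ` endpts G e)"

text \<open>The core H[A,B]: each component J of G - B is shrunk to the vertex J, each
  vertex b of B is represented by {b}.  So A = components G B.\<close>
definition core :: "('v,'e) mgraph \<Rightarrow> 'v set \<Rightarrow> ('v set,'e) mgraph" where
  "core G B = contract (\<lambda>v. if v \<in> B then {v} else comp_of G B v) G"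

text \<open>The B-fragment G / (V(G) - V(J)): vertices of J represented by singletons,
  the contraction vertex is the set V(G) - V(J).\<close>
definition fragment :: "('v,'e) mgraph \<Rightarrow> 'v set \<Rightarrow> ('v set,'e) mgraph" where
  "fragment G J = contract (\<lambda>v. if v \<in> J then {v} else verts G - J) G"

definition lambda_matchable :: "('v,'e) mgraph \<Rightarrow> 'v \<Rightarrow> bool" where
  "lambda_matchable G v \<longleftrightarrow> v \<in> verts G \<and> (\<exists>F \<subseteq> edges G. deg_in F G v = 3 \<and>
     (\<forall>u\<in>verts G - {v}. deg_in F G u = 1))"

definition lambda_matchable_pair :: "('v,'e) mgraph \<Rightarrow> 'v \<Rightarrow> 'v \<Rightarrow> bool" where
  "lambda_matchable_pair G a b \<longleftrightarrow> a \<in> verts G \<and> b \<in> verts G \<and> a \<noteq> b \<and>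
     (\<exists>F \<subseteq> edges G. deg_in F G a = 3 \<and> deg_in F G b = 3 \<and>
        (\<forall>u\<in>verts G - {a,b}. deg_in F G u = 1))"

end

theory Submission
  imports Defs
begin

(*
  Let F be a lambda-factor of G at b (degree 3 at b, degree 1 elsewhere).  As G is cubic and
  3-connected, every odd vertex set with nonempty complement is left by at least 3 edges;
  counting degrees at B then shows that every component of G - B is odd and left by exactly
  3 edges, that B is independent and that |A| = |B|.  Now F leaves every component by an odd
  number (1 or 3) of edges and meets B in |B| + 2 edges, so exactly one component J is left
  by 3 edges of F and every other one by a single edge.  The F-edges leaving components form
  the required factor of the core, and the F-edges meeting J that of the B-fragment of J.

  Conversely, each component C other than J is entered by a single edge of the core factor,
  at a vertex u.  Tutte's theorem gives a perfect matching of C - u: the odd components of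
  C - u - T are left by at least 3 edges each, all of them among the at most
  3(|T| + 1) + 3 - 1 edges meeting u or T or leaving C, other than the edge entering C at u;
  so there are at most |T| + 1 of them, and parity excludes |T| + 1.
  These matchings glue with the two factors into a lambda-factor of G at b.
*)

section \<open>Hall's theorem\<close>

lemma sdr_combine:
  assumes "J \<subseteq> I"
    and f: "inj_on f J" "\<forall>i\<in>J. f i \<in> A i \<inter> X"
    and g: "inj_on g (I - J)" "\<forall>i\<in>I - J. g i \<in> A i - X"
  shows "\<exists>h. inj_on h I \<and> (\<forall>i\<in>I. h i \<in> A i)"
proof -
  define h where "h i = (if i \<in> J then f i else g i)" for i
  have "inj_on h I"
  proof (rule inj_onI)
    fix i j assume "i \<in> I" "j \<in> I" "h i = h j"
    then show "i = j"
      using f g unfolding h_def inj_on_def by (cases "i \<in> J"; cases "j \<in> J") (auto, (metis DiffI)+)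
  qed
  moreover have "\<forall>i\<in>I. h i \<in> A i" using f g unfolding h_def by auto
  ultimately show ?thesis by blast
qed

lemma hall_condition_Diff_critical:
  assumes hall: "\<forall>K\<subseteq>I. card K \<le> card (\<Union>(A ` K))"
    and fin: "finite I" "\<forall>i\<in>I. finite (A i)"
    and J: "J \<subseteq> I" "card (\<Union>(A ` J)) = card J"
  shows "\<forall>K\<subseteq>I - J. card K \<le> card (\<Union>((\<lambda>i. A i - \<Union>(A ` J)) ` K))"
proof (intro allI impI)
  fix K assume K: "K \<subseteq> I - J"
  have finK: "finite K" and finJ: "finite J" using K J fin finite_subset by blast+
  have eq: "\<Union>((\<lambda>i. A i - \<Union>(A ` J)) ` K) = \<Union>(A ` (K \<union> J)) - \<Union>(A ` J)" by auto
  have fin_KJ: "finite (\<Union>(A ` (K \<union> J)))" using finK finJ fin K J by auto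
  have "card K + card J = card (K \<union> J)" using K finK finJ by (subst card_Un_disjoint) auto
  also have "\<dots> \<le> card (\<Union>(A ` (K \<union> J)))" using K J by (intro hall[rule_format]) blast
  moreover have sub: "\<Union>(A ` J) \<subseteq> \<Union>(A ` (K \<union> J))" by auto
  ultimately show "card K \<le> card (\<Union>((\<lambda>i. A i - \<Union>(A ` J)) ` K))"
    unfolding eq using J(2) card_Diff_subset[OF finite_subset[OF sub fin_KJ] sub] by simp
qed

lemma hall_condition_remove:
  assumes strict: "\<forall>K. K \<subseteq> I \<and> K \<noteq> {} \<and> K \<noteq> I \<longrightarrow> card K < card (\<Union>(A ` K))"
    and "i0 \<in> I"
  shows "\<forall>K\<subseteq>I - {i0}. card K \<le> card (\<Union>((\<lambda>i. A i - {x}) ` K))"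
proof (intro allI impI)
  fix K assume K: "K \<subseteq> I - {i0}"
  show "card K \<le> card (\<Union>((\<lambda>i. A i - {x}) ` K))"
  proof (cases "K = {}")
    case False
    then have "card K < card (\<Union>(A ` K))" using strict K \<open>i0 \<in> I\<close> by blast
    moreover have "\<Union>((\<lambda>i. A i - {x}) ` K) = \<Union>(A ` K) - {x}" by auto
    ultimately show ?thesis by (auto simp: card_Diff_singleton_if)
  qed simp
qed

theorem hall_sdr:
  assumes "finite I" "\<forall>i\<in>I. finite (A i)" "\<forall>J\<subseteq>I. card J \<le> card (\<Union>(A ` J))"
  shows "\<exists>f. inj_on f I \<and> (\<forall>i\<in>I. f i \<in> A i)"
  using assms
proof (induction "card I" arbitrary: I A rule: less_induct)
  case less
  note fin = less.prems(1,2) and hall = less.prems(3)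
  show ?case
  proof (cases "\<exists>J. J \<subseteq> I \<and> J \<noteq> {} \<and> J \<noteq> I \<and> card (\<Union>(A ` J)) = card J")
    case True
    then obtain J where J: "J \<subseteq> I" "J \<noteq> {}" "J \<noteq> I" "card (\<Union>(A ` J)) = card J" by blast
    have finJ: "finite J" using J fin finite_subset by blast
    have lt: "card J < card I" using J fin by (meson psubsetI psubset_card_mono)
    have lt': "card (I - J) < card I"
    proof -
      have "0 < card J" using J(2) finJ by (simp add: card_gt_0_iff)
      then show ?thesis using card_mono[OF fin(1) J(1)] finJ J(1) by (simp add: card_Diff_subset)
    qed
    have "\<forall>i\<in>J. finite (A i)" using J(1) fin(2) by blast
    moreover have "\<forall>K\<subseteq>J. card K \<le> card (\<Union>(A ` K))" using J(1) hall by blast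
    ultimately obtain f where f: "inj_on f J" "\<forall>i\<in>J. f i \<in> A i" using less.hyps[OF lt finJ] by blast
    have "\<forall>i\<in>I - J. finite (A i - \<Union>(A ` J))" using fin(2) by blast
    then obtain g where g: "inj_on g (I - J)" "\<forall>i\<in>I - J. g i \<in> A i - \<Union>(A ` J)"
      using less.hyps[OF lt' _ _ hall_condition_Diff_critical[OF hall fin J(1,4)]] fin(1) by blast
    show ?thesis using sdr_combine[OF J(1) f(1) _ g] f(2) by blast
  next
    case False
    show ?thesis
    proof (cases "I = {}")
      case False
      then obtain i0 where i0: "i0 \<in> I" by blast
      have "card {i0} \<le> card (A i0)" using hall[rule_format, of "{i0}"] i0 by simp
      then have "A i0 \<noteq> {}" by auto
      then obtain x where x: "x \<in> A i0" by blast
      have strict: "\<forall>K. K \<subseteq> I \<and> K \<noteq> {} \<and> K \<noteq> I \<longrightarrow> card K < card (\<Union>(A ` K))"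
      proof (intro allI impI)
        fix K assume "K \<subseteq> I \<and> K \<noteq> {} \<and> K \<noteq> I"
        then have "card (\<Union>(A ` K)) \<noteq> card K" using \<open>\<not> (\<exists>J. _)\<close> by blast
        then show "card K < card (\<Union>(A ` K))" using hall \<open>K \<subseteq> I \<and> _\<close> by (simp add: le_neq_implies_less)
      qed
      have lt: "card (I - {i0}) < card I" using fin(1) i0 by (rule card_Diff1_less)
      have "\<forall>i\<in>I - {i0}. finite (A i - {x})" using fin by blast
      then obtain g where "inj_on g (I - {i0})" "\<forall>i\<in>I - {i0}. g i \<in> A i - {x}"
        using less.hyps[OF lt _ _ hall_condition_remove[OF strict i0]] fin(1) by blast
      then show ?thesis using sdr_combine[of "{i0}" I "\<lambda>_. x" A "{x}" g] i0 x by simp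
    qed simp
  qed
qed

section \<open>Components of a symmetric relation and Tutte's theorem\<close>

definition rel_restrict :: "('a \<Rightarrow> 'a \<Rightarrow> bool) \<Rightarrow> 'a set \<Rightarrow> ('a \<times> 'a) set" where
  "rel_restrict R W = {(a,b). a \<in> W \<and> b \<in> W \<and> R a b}"

definition comp_in :: "('a \<Rightarrow> 'a \<Rightarrow> bool) \<Rightarrow> 'a set \<Rightarrow> 'a \<Rightarrow> 'a set" where
  "comp_in R W v = (rel_restrict R W)\<^sup>* `` {v}"

definition comps_in :: "('a \<Rightarrow> 'a \<Rightarrow> bool) \<Rightarrow> 'a set \<Rightarrow> 'a set set" where
  "comps_in R W = comp_in R W ` W"

definition odd_comps_card :: "('a \<Rightarrow> 'a \<Rightarrow> bool) \<Rightarrow> 'a set \<Rightarrow> nat" where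
  "odd_comps_card R W = card {C \<in> comps_in R W. odd (card C)}"

definition perfect_matching_fun :: "('a \<Rightarrow> 'a \<Rightarrow> bool) \<Rightarrow> 'a set \<Rightarrow> ('a \<Rightarrow> 'a) \<Rightarrow> bool" where
  "perfect_matching_fun R W m \<longleftrightarrow> (\<forall>v\<in>W. m v \<in> W \<and> m v \<noteq> v \<and> m (m v) = v \<and> R v (m v))"

definition tutte_condition :: "('a \<Rightarrow> 'a \<Rightarrow> bool) \<Rightarrow> 'a set \<Rightarrow> bool" where
  "tutte_condition R V \<longleftrightarrow> (\<forall>S\<subseteq>V. odd_comps_card R (V - S) \<le> card S)"

lemma comp_in_self: "v \<in> comp_in R W v"
  unfolding comp_in_def by auto

lemma comp_in_subset: "v \<in> W \<Longrightarrow> comp_in R W v \<subseteq> W"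
proof -
  have "(v, y) \<in> (rel_restrict R W)\<^sup>* \<Longrightarrow> y = v \<or> y \<in> W" for y
    by (induction rule: rtrancl_induct) (auto simp: rel_restrict_def)
  then show "v \<in> W \<Longrightarrow> comp_in R W v \<subseteq> W" unfolding comp_in_def by fastforce
qed

lemma sym_rel_restrict: "symp R \<Longrightarrow> sym (rel_restrict R W)"
  unfolding rel_restrict_def sym_def by (auto dest: sympD)

lemma comp_in_eq:
  assumes "symp R" and "y \<in> comp_in R W v"
  shows "comp_in R W y = comp_in R W v"
proof -
  have "sym ((rel_restrict R W)\<^sup>*)" using sym_rtrancl[OF sym_rel_restrict[OF assms(1)]] .
  then have "(y, v) \<in> (rel_restrict R W)\<^sup>*" using assms(2) unfolding comp_in_def by (auto dest: symD)
  then show ?thesis using assms(2) unfolding comp_in_def by (auto intro: rtrancl_trans)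
qed

lemma comp_in_adj:
  assumes "symp R" "x \<in> W" "y \<in> W" "R x y"
  shows "comp_in R W x = comp_in R W y"
proof -
  have "y \<in> comp_in R W x" using assms(2-4) unfolding comp_in_def rel_restrict_def by auto
  then show ?thesis using comp_in_eq[OF assms(1)] by metis
qed

lemma comp_in_closed_subset:
  assumes "U \<subseteq> W'" "W' \<subseteq> W" "\<forall>a\<in>U. \<forall>b\<in>W. R a b \<longrightarrow> b \<in> U" "v \<in> U"
  shows "comp_in R W' v = comp_in R U v"
proof
  show "comp_in R U v \<subseteq> comp_in R W' v"
    unfolding comp_in_def using rtrancl_mono[of "rel_restrict R U" "rel_restrict R W'"] assms(1)
    unfolding rel_restrict_def by auto
next
  have "(v, y) \<in> (rel_restrict R W')\<^sup>* \<Longrightarrow> y \<in> U \<and> (v, y) \<in> (rel_restrict R U)\<^sup>*" for y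
  proof (induction rule: rtrancl_induct)
    case (step y z)
    then have "z \<in> U" using assms(2,3) unfolding rel_restrict_def by auto
    then have "(y, z) \<in> rel_restrict R U" using step unfolding rel_restrict_def by auto
    then show ?case using step \<open>z \<in> U\<close> by (meson rtrancl_into_rtrancl)
  qed (use assms(4) in simp)
  then show "comp_in R W' v \<subseteq> comp_in R U v" unfolding comp_in_def by auto
qed

lemma comps_in_of_mem:
  assumes "symp R" "C \<in> comps_in R W" "v \<in> C"
  shows "comp_in R W v = C"
proof -
  obtain w where "C = comp_in R W w" using assms(2) unfolding comps_in_def by blast
  then show ?thesis using comp_in_eq[OF assms(1)] assms(3) by simp
qed

lemma comps_in_disjoint:
  assumes "symp R" "C \<in> comps_in R W" "D \<in> comps_in R W" "C \<noteq> D"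
  shows "C \<inter> D = {}"
proof -
  have "x \<notin> D" if "x \<in> C" for x
    using assms comps_in_of_mem[OF assms(1)] that by metis
  then show ?thesis by blast
qed

lemma comps_in_subset: "C \<in> comps_in R W \<Longrightarrow> C \<subseteq> W"
  unfolding comps_in_def using comp_in_subset by fastforce

lemma comps_in_nonempty: "C \<in> comps_in R W \<Longrightarrow> C \<noteq> {}"
  unfolding comps_in_def using comp_in_self by (metis empty_iff imageE)

lemma Union_comps_in: "\<Union>(comps_in R W) = W"
proof
  show "\<Union>(comps_in R W) \<subseteq> W" using comps_in_subset by blast
  show "W \<subseteq> \<Union>(comps_in R W)" unfolding comps_in_def using comp_in_self by fastforce
qed

lemma finite_comps_in: "finite W \<Longrightarrow> finite (comps_in R W)"
  unfolding comps_in_def by simp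

lemma comp_in_mem_comps_in: "v \<in> W \<Longrightarrow> comp_in R W v \<in> comps_in R W"
  unfolding comps_in_def by blast

lemma comps_in_closed:
  assumes "symp R" "C \<in> comps_in R W" "a \<in> C" "b \<in> W" "R a b"
  shows "b \<in> C"
proof -
  have "a \<in> W" using assms(2,3) comps_in_subset by blast
  then have "comp_in R W b = C"
    using comp_in_adj[OF assms(1) _ assms(4,5)] comps_in_of_mem[OF assms(1-3)] by simp
  then show ?thesis using comp_in_self by metis
qed

lemma card_eq_sum_comps_in:
  assumes "symp R" "finite W"
  shows "card W = (\<Sum>C\<in>comps_in R W. card C)"
proof -
  have "card (\<Union>(comps_in R W)) = (\<Sum>C\<in>comps_in R W. card C)"
  proof (rule card_Union_disjoint)
    show "pairwise disjnt (comps_in R W)"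
      unfolding pairwise_def disjnt_def using comps_in_disjoint[OF assms(1)] by blast
    show "\<And>C. C \<in> comps_in R W \<Longrightarrow> finite C"
      using assms(2) comps_in_subset by (meson finite_subset)
  qed
  then show ?thesis by (simp add: Union_comps_in)
qed

lemma even_sum_plus_card_odd:
  fixes f :: "'a \<Rightarrow> nat"
  shows "finite X \<Longrightarrow> even (sum f X + card {x\<in>X. odd (f x)})"
proof (induction X rule: finite_induct)
  case (insert x F)
  have "{y \<in> insert x F. odd (f y)} =
      (if odd (f x) then insert x {y\<in>F. odd (f y)} else {y\<in>F. odd (f y)})"
    by auto
  then show ?case using insert by (cases "odd (f x)") (simp_all add: card_insert_if)
qed simp

lemma even_odd_comps_card_plus_card:
  assumes "symp R" "finite W"
  shows "even (odd_comps_card R W + card W)"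
  using even_sum_plus_card_odd[OF finite_comps_in[OF assms(2)], of card] card_eq_sum_comps_in[OF assms]
  unfolding odd_comps_card_def by (simp add: add.commute)

lemma comps_in_Diff_subset:
  assumes sy: "symp R" and C: "C \<in> comps_in R W" and Y: "Y \<subseteq> C"
  shows "comps_in R (W - Y) = (comps_in R W - {C}) \<union> comps_in R (C - Y)"
proof -
  have CW: "C \<subseteq> W" using comps_in_subset C by blast
  have outside: "comp_in R (W - Y) v = comp_in R W v" if "v \<in> W - C" for v
  proof -
    have "\<forall>a\<in>W - C. \<forall>b\<in>W. R a b \<longrightarrow> b \<in> W - C"
      using comps_in_closed[OF sy C] sy unfolding symp_def by blast
    then show ?thesis
      using comp_in_closed_subset[of "W - C" "W - Y" W R v] comp_in_closed_subset[of "W - C" W W R v]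
        that Y by auto
  qed
  have inside: "comp_in R (W - Y) v = comp_in R (C - Y) v" if "v \<in> C - Y" for v
  proof -
    have "\<forall>a\<in>C - Y. \<forall>b\<in>W - Y. R a b \<longrightarrow> b \<in> C - Y" using comps_in_closed[OF sy C] by blast
    then show ?thesis using comp_in_closed_subset[of "C - Y" "W - Y" "W - Y" R v] that CW by auto
  qed
  have others: "comps_in R W - {C} = comp_in R W ` (W - C)"
  proof
    show "comps_in R W - {C} \<subseteq> comp_in R W ` (W - C)"
    proof
      fix D assume "D \<in> comps_in R W - {C}"
      then obtain w where w: "w \<in> W" "D = comp_in R W w" "D \<noteq> C" unfolding comps_in_def by auto
      have "w \<notin> C" using comps_in_of_mem[OF sy C] w by metis
      then show "D \<in> comp_in R W ` (W - C)" using w by auto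
    qed
    show "comp_in R W ` (W - C) \<subseteq> comps_in R W - {C}"
      using comp_in_self comps_in_def by fastforce
  qed
  have "W - Y = (W - C) \<union> (C - Y)" using CW Y by blast
  then have "comps_in R (W - Y) = comp_in R (W - Y) ` (W - C) \<union> comp_in R (W - Y) ` (C - Y)"
    unfolding comps_in_def by auto
  also have "\<dots> = comp_in R W ` (W - C) \<union> comp_in R (C - Y) ` (C - Y)"
    using outside inside by (metis (no_types, lifting) image_cong)
  finally show ?thesis using others unfolding comps_in_def by simp
qed

lemma odd_comps_card_Diff_subset:
  assumes sy: "symp R" and fin: "finite W" and C: "C \<in> comps_in R W" and Y: "Y \<subseteq> C"
  shows "odd_comps_card R (W - Y) + (if odd (card C) then 1 else 0) =
    odd_comps_card R W + odd_comps_card R (C - Y)"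
proof -
  let ?odd = "\<lambda>X. {D \<in> X. odd (card D)}"
  let ?P = "comps_in R W - {C}" and ?Q = "comps_in R (C - Y)"
  have "?P \<inter> ?Q = {}"
  proof (rule ccontr)
    assume "?P \<inter> ?Q \<noteq> {}"
    then obtain D where D: "D \<in> ?P" "D \<in> ?Q" by blast
    then have "D \<inter> C = {}" using comps_in_disjoint[OF sy _ C] by blast
    moreover have "D \<subseteq> C" "D \<noteq> {}" using comps_in_subset[OF D(2)] comps_in_nonempty[OF D(2)] by auto
    ultimately show False by blast
  qed
  moreover have "finite ?P" "finite ?Q"
    using finite_comps_in fin finite_subset[OF comps_in_subset[OF C] fin] by auto
  moreover have "?odd (?P \<union> ?Q) = ?odd ?P \<union> ?odd ?Q" by blast
  ultimately have "card (?odd (?P \<union> ?Q)) = card (?odd ?P) + odd_comps_card R (C - Y)"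
    unfolding odd_comps_card_def by (simp add: card_Un_disjoint disjoint_iff)
  then have split: "odd_comps_card R (W - Y) = card (?odd ?P) + odd_comps_card R (C - Y)"
    unfolding odd_comps_card_def comps_in_Diff_subset[OF sy C Y] .
  have "?odd (comps_in R W) = (if odd (card C) then insert C (?odd ?P) else ?odd ?P)"
    using C by auto
  then have "odd_comps_card R W = card (?odd ?P) + (if odd (card C) then 1 else 0)"
    unfolding odd_comps_card_def using \<open>finite ?P\<close> by simp
  then show ?thesis using split by simp
qed

lemma tutte_conditionD: "tutte_condition R V \<Longrightarrow> S \<subseteq> V \<Longrightarrow> odd_comps_card R (V - S) \<le> card S"
  unfolding tutte_condition_def by blast

lemma perfect_matching_fun_glue:
  assumes sym: "symp R" and S: "S \<subseteq> V"
    and r: "bij_betw r (comps_in R (V - S)) S"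
    and x: "\<And>C. C \<in> comps_in R (V - S) \<Longrightarrow> x C \<in> C \<and> R (x C) (r C)"
    and m: "\<And>C. C \<in> comps_in R (V - S) \<Longrightarrow> perfect_matching_fun R (C - {x C}) (m C)"
  shows "\<exists>m'. perfect_matching_fun R V m'"
proof -
  let ?K = "comps_in R (V - S)" and ?c = "comp_in R (V - S)"
  define r' where "r' = inv_into ?K r"
  define m' where "m' v = (if v \<in> S then x (r' v) else if v = x (?c v) then r (?c v) else m (?c v) v)" for v
  have r'K: "r' s \<in> ?K" and rr': "r (r' s) = s" if "s \<in> S" for s
    using that r bij_betw_inv_into_left[OF r] bij_betwE[OF bij_betw_inv_into[OF r]] unfolding r'_def
    by (auto simp: bij_betw_def f_inv_into_f)
  have r'r: "r' (r C) = C" if "C \<in> ?K" for C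
    using that r unfolding r'_def bij_betw_def by simp
  have cK: "?c v \<in> ?K" if "v \<in> V - S" for v using that by (rule comp_in_mem_comps_in)
  have cC: "?c v = C" if "C \<in> ?K" "v \<in> C" for v C using comps_in_of_mem[OF sym that] .
  have KW: "C \<subseteq> V - S" if "C \<in> ?K" for C using that by (rule comps_in_subset)
  have at_S: "m' u \<in> V \<and> m' u \<noteq> u \<and> m' (m' u) = u \<and> R u (m' u)" if u: "u \<in> S" for u
  proof -
    let ?C = "r' u"
    have C: "?C \<in> ?K" and xC: "x ?C \<in> ?C" "R (x ?C) u" using x[OF r'K[OF u]] rr'[OF u] r'K[OF u] by auto
    have "x ?C \<in> V - S" using KW[OF C] xC(1) by blast
    moreover have "m' u = x ?C" using u unfolding m'_def by simp
    moreover have "m' (x ?C) = u" using \<open>x ?C \<in> V - S\<close> cC[OF C xC(1)] rr'[OF u] unfolding m'_def by simp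
    ultimately show ?thesis using xC(2) u sym by (auto dest: sympD)
  qed
  have at_W: "m' u \<in> V \<and> m' u \<noteq> u \<and> m' (m' u) = u \<and> R u (m' u)" if u: "u \<in> V - S" for u
  proof -
    define C where "C = ?c u"
    have C: "C \<in> ?K" unfolding C_def using cK[OF u] .
    show ?thesis
    proof (cases "u = x C")
      case True
      have "r C \<in> S" using r C by (auto simp: bij_betw_def)
      moreover have "m' u = r C" using u True unfolding m'_def C_def by simp
      moreover have "m' (r C) = u" using \<open>r C \<in> S\<close> r'r[OF C] True unfolding m'_def by simp
      ultimately show ?thesis using x[OF C] True u S by auto
    next
      case False
      have uC: "u \<in> C - {x C}" using False comp_in_self[of u R "V - S"] unfolding C_def by blast
      have mC: "m C u \<in> C - {x C}" "m C u \<noteq> u" "m C (m C u) = u" "R u (m C u)"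
        using m[OF C] uC unfolding perfect_matching_fun_def by blast+
      have "m C u \<in> V - S" using mC(1) KW[OF C] by blast
      moreover have "m' u = m C u" using u False unfolding m'_def C_def by simp
      moreover have "m' (m C u) = u" using \<open>m C u \<in> V - S\<close> cC[OF C] mC(1,3) unfolding m'_def by simp
      ultimately show ?thesis using mC(2,4) by simp
    qed
  qed
  have "perfect_matching_fun R V m'"
    unfolding perfect_matching_fun_def using at_S at_W S by blast
  then show ?thesis by blast
qed

text \<open>A maximal barrier S: the classical proof of Tutte's theorem matches the components of
  V - S, which turn out to be odd and factor-critical, injectively to S.\<close>

locale tutte_max_set =
  fixes R :: "'a \<Rightarrow> 'a \<Rightarrow> bool" and V S :: "'a set"
  assumes sym: "symp R" and fin: "finite V" and tutte: "tutte_condition R V"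
    and S_subset: "S \<subseteq> V" and tight: "odd_comps_card R (V - S) = card S"
    and maximal: "\<And>T. T \<subseteq> V \<Longrightarrow> odd_comps_card R (V - T) = card T \<Longrightarrow> card T \<le> card S"
begin

lemma extension_deficient:
  assumes Y: "Y \<subseteq> V - S" "Y \<noteq> {}"
  shows "odd_comps_card R (V - S - Y) < card S + card Y"
proof -
  have SY: "S \<union> Y \<subseteq> V" and eq: "V - S - Y = V - (S \<union> Y)" using Y S_subset by auto
  have finSY: "finite S" "finite Y" using SY fin finite_subset by blast+
  then have card_SY: "card (S \<union> Y) = card S + card Y" using Y by (subst card_Un_disjoint) auto
  have "odd_comps_card R (V - S - Y) \<le> card S + card Y"
    using tutte_conditionD[OF tutte SY] eq card_SY by simp
  moreover have "odd_comps_card R (V - S - Y) \<noteq> card S + card Y"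
  proof
    assume "odd_comps_card R (V - S - Y) = card S + card Y"
    then have "card S + card Y \<le> card S" using maximal[OF SY] eq card_SY by simp
    then show False using Y(2) finSY(2) by simp
  qed
  ultimately show ?thesis by simp
qed

lemma comps_odd:
  assumes C: "C \<in> comps_in R (V - S)"
  shows "odd (card C)"
proof (rule ccontr)
  assume even: "\<not> odd (card C)"
  obtain c where c: "c \<in> C" using comps_in_nonempty[OF C] by blast
  have finC: "finite C" using comps_in_subset[OF C] fin finite_subset by blast
  have "card C > 0" using c finC by (auto simp: card_gt_0_iff)
  then have "odd (card (C - {c}))" using even c by (simp add: card_Diff_singleton)
  then have "odd (odd_comps_card R (C - {c}))"
    using even_odd_comps_card_plus_card[OF sym, of "C - {c}"] finC by auto
  moreover have "odd_comps_card R (V - S - {c}) = card S + odd_comps_card R (C - {c})"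
    using odd_comps_card_Diff_subset[OF sym _ C, of "{c}"] fin c even tight by simp
  ultimately have "odd_comps_card R (V - S - {c}) \<ge> card S + card {c}" by (simp add: odd_pos Suc_le_eq)
  then show False using extension_deficient[of "{c}"] c comps_in_subset[OF C] by fastforce
qed

lemma comp_minus_tutte:
  assumes C: "C \<in> comps_in R (V - S)" and c: "c \<in> C"
  shows "tutte_condition R (C - {c})"
  unfolding tutte_condition_def
proof (intro allI impI)
  fix T assume T: "T \<subseteq> C - {c}"
  have finC: "finite C" using comps_in_subset[OF C] fin finite_subset by blast
  have finT: "finite T" using T finC finite_subset by blast
  have "card (C - {c} - T) = card (C - {c}) - card T" using card_Diff_subset[OF finT T] .
  moreover have "card (C - {c}) = card C - 1" using c by (simp add: card_Diff_singleton)
  moreover have "card T \<le> card (C - {c})" using card_mono[OF _ T] finC by simp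
  moreover have "card C > 0" using c finC by (auto simp: card_gt_0_iff)
  ultimately have card_rest: "card (C - {c} - T) + card T + 1 = card C" by simp
  have "even (odd_comps_card R (C - {c} - T) + card (C - {c} - T))"
    using even_odd_comps_card_plus_card[OF sym] finC by simp
  then have parity: "even (odd_comps_card R (C - {c} - T) + card T)"
    using card_rest comps_odd[OF C] by presburger
  let ?Y = "insert c T"
  have "c \<notin> T" using T by blast
  then have Y: "?Y \<subseteq> C" "C - ?Y = C - {c} - T" "card ?Y = card T + 1" using T c finT by auto
  have "odd_comps_card R (V - S - ?Y) + 1 = card S + odd_comps_card R (C - {c} - T)"
    using odd_comps_card_Diff_subset[OF sym _ C Y(1)] fin comps_odd[OF C] tight Y(2) by simp
  moreover have "odd_comps_card R (V - S - ?Y) < card S + card ?Y"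
    using extension_deficient[of ?Y] Y(1) comps_in_subset[OF C] by blast
  ultimately have "odd_comps_card R (C - {c} - T) \<le> card T + 1" using Y(3) by linarith
  moreover have "odd_comps_card R (C - {c} - T) \<noteq> card T + 1" using parity by auto
  ultimately show "odd_comps_card R (C - {c} - T) \<le> card T" by linarith
qed

lemma card_comps: "card (comps_in R (V - S)) = card S"
proof -
  have "{C \<in> comps_in R (V - S). odd (card C)} = comps_in R (V - S)" using comps_odd by blast
  then show ?thesis using tight unfolding odd_comps_card_def by simp
qed

definition nbrs :: "'a set \<Rightarrow> 'a set" where
  "nbrs C = {s\<in>S. \<exists>x\<in>C. R x s}"

lemma comp_mem_comps_Diff:
  assumes C: "C \<in> comps_in R (V - S)" and T: "nbrs C \<subseteq> T" "T \<subseteq> S"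
  shows "C \<in> comps_in R (V - T)"
proof -
  obtain v where v: "v \<in> C" using comps_in_nonempty[OF C] by blast
  have CW: "C \<subseteq> V - S" using comps_in_subset[OF C] .
  have closed: "\<forall>a\<in>C. \<forall>b\<in>V - S. R a b \<longrightarrow> b \<in> C"
    using comps_in_closed[OF sym C] by blast
  have "\<forall>a\<in>C. \<forall>b\<in>V - T. R a b \<longrightarrow> b \<in> C"
  proof (intro ballI impI)
    fix a b assume "a \<in> C" "b \<in> V - T" "R a b"
    then show "b \<in> C" using closed T unfolding nbrs_def by (cases "b \<in> S") blast+
  qed
  moreover have "C \<subseteq> V - T" using CW T by blast
  ultimately have "comp_in R (V - T) v = comp_in R C v"
    using comp_in_closed_subset[of C "V - T" "V - T" R v] v by blast
  also have "\<dots> = comp_in R (V - S) v"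
    using comp_in_closed_subset[of C "V - S" "V - S" R v] CW closed v by simp
  also have "\<dots> = C" using comps_in_of_mem[OF sym C v] .
  moreover have "v \<in> V - T" using v CW T by blast
  ultimately show ?thesis using comp_in_mem_comps_in[of v "V - T" R] by simp
qed

lemma hall_nbrs: "\<forall>K\<subseteq>comps_in R (V - S). card K \<le> card (\<Union>(nbrs ` K))"
proof (intro allI impI)
  fix K assume K: "K \<subseteq> comps_in R (V - S)"
  let ?T = "\<Union>(nbrs ` K)"
  have TS: "?T \<subseteq> S" unfolding nbrs_def by blast
  have "K \<subseteq> {D \<in> comps_in R (V - ?T). odd (card D)}"
  proof
    fix C assume "C \<in> K"
    then have "C \<in> comps_in R (V - S)" "nbrs C \<subseteq> ?T" using K by auto
    then show "C \<in> {D \<in> comps_in R (V - ?T). odd (card D)}"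
      using comp_mem_comps_Diff[OF _ _ TS] comps_odd by blast
  qed
  then have "card K \<le> odd_comps_card R (V - ?T)"
    unfolding odd_comps_card_def using fin by (intro card_mono) (simp_all add: finite_comps_in)
  also have "\<dots> \<le> card ?T" using tutte_conditionD[OF tutte] TS S_subset by blast
  finally show "card K \<le> card ?T" .
qed

end

theorem tutte:
  assumes sym: "symp R" and "finite V" "tutte_condition R V"
  shows "\<exists>m. perfect_matching_fun R V m"
  using assms(2,3)
proof (induction "card V" arbitrary: V rule: less_induct)
  case less
  let ?tight = "\<lambda>S. S \<subseteq> V \<and> odd_comps_card R (V - S) = card S"
  have "?tight {}" using tutte_conditionD[OF less.prems(2), of "{}"] by simp
  moreover have "\<forall>S. ?tight S \<longrightarrow> card S < card V + 1"
    using card_mono[OF less.prems(1)] by (simp add: le_imp_less_Suc)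
  ultimately have "\<exists>S. ?tight S \<and> (\<forall>T. ?tight T \<longrightarrow> card T \<le> card S)"
    by (rule ex_has_greatest_nat)
  then obtain S where S: "?tight S" and Smax: "\<And>T. ?tight T \<Longrightarrow> card T \<le> card S" by blast
  interpret tutte_max_set R V S using sym less.prems S Smax by unfold_locales auto
  let ?K = "comps_in R (V - S)"
  have finS: "finite S" using S_subset less.prems(1) finite_subset by blast
  have IH: "\<exists>m. perfect_matching_fun R (C - {c}) m" if C: "C \<in> ?K" and c: "c \<in> C" for C c
  proof -
    have CV: "C \<subseteq> V" using comps_in_subset[OF C] by blast
    then have finC: "finite C" using less.prems(1) finite_subset by blast
    have "card (C - {c}) < card V"
      using card_Diff1_less[OF finC c] card_mono[OF less.prems(1) CV] by linarith
    then show ?thesis using less.hyps finC comp_minus_tutte[OF C c] by blast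
  qed
  have "\<forall>C\<in>?K. finite (nbrs C)" unfolding nbrs_def using finS by simp
  then obtain r where r: "inj_on r ?K" "\<forall>C\<in>?K. r C \<in> nbrs C"
    using hall_sdr[OF finite_comps_in _ hall_nbrs] less.prems(1) by blast
  have "r ` ?K = S"
  proof (rule card_subset_eq[OF finS])
    show "r ` ?K \<subseteq> S" using r(2) unfolding nbrs_def by blast
  qed (simp add: card_image r(1) card_comps)
  then have bij: "bij_betw r ?K S" using r(1) by (simp add: bij_betw_def)
  have "\<forall>C\<in>?K. \<exists>y. y \<in> C \<and> R y (r C)" using r(2) unfolding nbrs_def by blast
  then obtain x where x: "\<forall>C\<in>?K. x C \<in> C \<and> R (x C) (r C)" by (rule bchoice[elim_format]) blast
  have "\<forall>C\<in>?K. \<exists>m. perfect_matching_fun R (C - {x C}) m" using IH x by blast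
  then obtain m where "\<forall>C\<in>?K. perfect_matching_fun R (C - {x C}) (m C)"
    by (rule bchoice[elim_format]) blast
  then show ?case using perfect_matching_fun_glue[OF sym S_subset bij] x by blast
qed

section \<open>Cuts and degree counting in multigraphs\<close>

definition adj :: "('v,'e) mgraph \<Rightarrow> 'v \<Rightarrow> 'v \<Rightarrow> bool" where
  "adj G u v \<longleftrightarrow> (\<exists>e\<in>edges G. endpts G e = {u,v})"

definition cut_edges :: "('v,'e) mgraph \<Rightarrow> 'e set \<Rightarrow> 'v set \<Rightarrow> 'e set" where
  "cut_edges G F X = {e\<in>F. card (endpts G e \<inter> X) = 1}"

definition inner_edges :: "('v,'e) mgraph \<Rightarrow> 'e set \<Rightarrow> 'v set \<Rightarrow> 'e set" where
  "inner_edges G F X = {e\<in>F. card (endpts G e \<inter> X) = 2}"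

definition incident_edges :: "('v,'e) mgraph \<Rightarrow> 'v set \<Rightarrow> 'e set" where
  "incident_edges G X = {e\<in>edges G. endpts G e \<inter> X \<noteq> {}}"

abbreviation cut :: "('v,'e) mgraph \<Rightarrow> 'v set \<Rightarrow> 'e set" where
  "cut G X \<equiv> cut_edges G (edges G) X"

lemma symp_adj: "symp (adj G)"
  unfolding symp_def adj_def by (auto simp: insert_commute)

lemma components_eq_comps_in: "components G S = comps_in (adj G) (verts G - S)"
  unfolding components_def comps_in_def comp_of_def comp_in_def adj_minus_def rel_restrict_def adj_def
  by simp

lemma comp_of_eq_comp_in: "comp_of G S v = comp_in (adj G) (verts G - S) v"
  unfolding comp_of_def comp_in_def adj_minus_def rel_restrict_def adj_def by simp

lemma comp_of_self: "v \<in> comp_of G S v"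
  unfolding comp_of_eq_comp_in by (rule comp_in_self)

lemma mgraph_edgeE:
  assumes "mgraph G" "e \<in> edges G"
  obtains p q where "p \<noteq> q" "endpts G e = {p,q}" "p \<in> verts G" "q \<in> verts G"
proof -
  have "card (endpts G e) = 2" "endpts G e \<subseteq> verts G" using assms unfolding mgraph_def by auto
  then show ?thesis using that by (metis card_2_iff insert_subset)
qed

lemma card_doubleton_Int_eq_1:
  "p \<noteq> q \<Longrightarrow> card ({p,q} \<inter> X) = 1 \<longleftrightarrow> (p \<in> X \<and> q \<notin> X) \<or> (q \<in> X \<and> p \<notin> X)"
  by (cases "p \<in> X"; cases "q \<in> X") (auto simp: Int_insert_left)

lemma card_doubleton_Int_eq_2: "p \<noteq> q \<Longrightarrow> card ({p,q} \<inter> X) = 2 \<longleftrightarrow> p \<in> X \<and> q \<in> X"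
  by (cases "p \<in> X"; cases "q \<in> X") (auto simp: Int_insert_left)

lemma cut_edgeE:
  assumes "mgraph G" "e \<in> cut G X"
  obtains x y where "endpts G e = {x,y}" "x \<in> X" "y \<notin> X" "x \<in> verts G" "y \<in> verts G"
proof -
  have e: "e \<in> edges G" "card (endpts G e \<inter> X) = 1" using assms(2) unfolding cut_edges_def by auto
  obtain p q where pq: "p \<noteq> q" "endpts G e = {p,q}" "p \<in> verts G" "q \<in> verts G"
    using mgraph_edgeE[OF assms(1) e(1)] .
  then have "(p \<in> X \<and> q \<notin> X) \<or> (q \<in> X \<and> p \<notin> X)" using e(2) card_doubleton_Int_eq_1 by metis
  then show ?thesis using that pq by (metis insert_commute)
qed

lemma mem_cut_edgesI:
  "e \<in> F \<Longrightarrow> endpts G e = {x,y} \<Longrightarrow> x \<in> X \<Longrightarrow> y \<notin> X \<Longrightarrow> e \<in> cut_edges G F X"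
  unfolding cut_edges_def by (cases "x = y") (auto simp: Int_insert_left)

lemma cut_edges_eq_Int: "F \<subseteq> edges G \<Longrightarrow> cut_edges G F X = F \<inter> cut G X"
  unfolding cut_edges_def by blast

lemma deg_in_insert:
  assumes "e \<notin> F" "finite F"
  shows "deg_in (insert e F) G v = deg_in F G v + (if v \<in> endpts G e then 1 else 0)"
proof -
  have "{x\<in>insert e F. v \<in> endpts G x} =
      (if v \<in> endpts G e then insert e {x\<in>F. v \<in> endpts G x} else {x\<in>F. v \<in> endpts G x})"
    by auto
  then show ?thesis unfolding deg_in_def using assms by simp
qed

lemma sum_deg_in_eq_sum_card_Int:
  assumes "finite F" "finite X"
  shows "(\<Sum>v\<in>X. deg_in F G v) = (\<Sum>e\<in>F. card (endpts G e \<inter> X))"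
  using assms(1)
proof (induction F rule: finite_induct)
  case (insert e F)
  have "(\<Sum>v\<in>X. deg_in (insert e F) G v) =
      (\<Sum>v\<in>X. deg_in F G v + (if v \<in> endpts G e then 1 else 0))"
    by (intro sum.cong refl) (rule deg_in_insert[OF insert(2,1)])
  also have "\<dots> = (\<Sum>v\<in>X. deg_in F G v) + (\<Sum>v\<in>X. (if v \<in> endpts G e then 1 else 0))"
    by (rule sum.distrib)
  also have "(\<Sum>v\<in>X. (if v \<in> endpts G e then 1 else 0)) = card (endpts G e \<inter> X)"
    using assms(2) by (simp add: sum.If_cases Int_def conj_commute)
  finally show ?case using insert by simp
qed (simp add: deg_in_def)

lemma sum_card_Int_eq_cut_inner:
  assumes "finite F" "\<forall>e\<in>F. card (endpts G e \<inter> X) \<le> 2"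
  shows "(\<Sum>e\<in>F. card (endpts G e \<inter> X)) = card (cut_edges G F X) + 2 * card (inner_edges G F X)"
  using assms
proof (induction F rule: finite_induct)
  case (insert e F)
  have c: "cut_edges G (insert e F) X =
      (if card (endpts G e \<inter> X) = 1 then insert e (cut_edges G F X) else cut_edges G F X)"
    unfolding cut_edges_def by auto
  have i: "inner_edges G (insert e F) X =
      (if card (endpts G e \<inter> X) = 2 then insert e (inner_edges G F X) else inner_edges G F X)"
    unfolding inner_edges_def by auto
  have "finite (cut_edges G F X)" "finite (inner_edges G F X)"
    "e \<notin> cut_edges G F X" "e \<notin> inner_edges G F X"
    using insert(1,2) unfolding cut_edges_def inner_edges_def by simp_all
  moreover have "card (endpts G e \<inter> X) \<in> {0, 1, 2}" using insert(4) by auto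
  ultimately show ?case using insert c i by auto
qed (simp add: cut_edges_def inner_edges_def)

lemma sum_deg_in_eq_cut_inner:
  assumes "mgraph G" "F \<subseteq> edges G" "finite X"
  shows "(\<Sum>v\<in>X. deg_in F G v) = card (cut_edges G F X) + 2 * card (inner_edges G F X)"
proof -
  have finF: "finite F" using assms(1,2) unfolding mgraph_def using finite_subset by blast
  have "\<forall>e\<in>F. card (endpts G e \<inter> X) \<le> 2"
  proof
    fix e assume "e \<in> F"
    then have "card (endpts G e) = 2" using assms unfolding mgraph_def by blast
    then show "card (endpts G e \<inter> X) \<le> 2" by (metis Int_lower1 card.infinite card_mono zero_neq_numeral)
  qed
  then show ?thesis
    using sum_deg_in_eq_sum_card_Int[OF finF assms(3)] sum_card_Int_eq_cut_inner[OF finF] by simp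
qed

lemma sum_le_lower_bound_imp_eq:
  fixes f :: "'a \<Rightarrow> nat"
  assumes "finite X" "\<forall>x\<in>X. k \<le> f x" "sum f X \<le> k * card X"
  shows "\<forall>x\<in>X. f x = k"
proof (rule ccontr)
  assume "\<not> ?thesis"
  then obtain a where "a \<in> X" "k < f a" using assms(2) by (metis le_neq_implies_less)
  then have "sum (\<lambda>_. k) X < sum f X"
    using sum_strict_mono_ex1[OF assms(1), of "\<lambda>_. k" f] assms(2) by blast
  then show False using assms(3) by (simp add: mult.commute)
qed

lemma cut_comps_in_disjoint:
  assumes "mgraph G" and D: "D \<in> comps_in (adj G) W" "D' \<in> comps_in (adj G) W" "D \<noteq> D'"
  shows "cut G D \<inter> cut G D' = {}"
proof (rule ccontr)
  assume "\<not> ?thesis"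
  then obtain e where e: "e \<in> cut G D" "e \<in> cut G D'" by blast
  obtain x y where xy: "endpts G e = {x,y}" "x \<in> D" "y \<notin> D" "x \<in> verts G" "y \<in> verts G"
    by (rule cut_edgeE[OF assms(1) e(1)])
  obtain x' y' where xy': "endpts G e = {x',y'}" "x' \<in> D'" "y' \<notin> D'" "x' \<in> verts G" "y' \<in> verts G"
    by (rule cut_edgeE[OF assms(1) e(2)])
  have disj: "D \<inter> D' = {}" using comps_in_disjoint[OF symp_adj D] .
  then have "x \<noteq> x'" using xy xy' by blast
  then have "x' = y" using xy(1) xy'(1) by (metis doubleton_eq_iff)
  moreover have "adj G x x'" unfolding adj_def using e(1) xy xy'(1) \<open>x \<noteq> x'\<close>
    unfolding cut_edges_def by (metis (no_types, lifting) doubleton_eq_iff mem_Collect_eq)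
  moreover have "x \<in> W" "x' \<in> W" using comps_in_subset D xy(2) xy'(2) by blast+
  ultimately have "x' \<in> D" using comps_in_closed[OF symp_adj D(1) xy(2)] by blast
  then show False using disj xy'(2) by blast
qed

lemma perfect_matching_fun_edges:
  assumes "mgraph G" and m: "perfect_matching_fun (adj G) W m"
  shows "\<exists>M\<subseteq>edges G. (\<forall>e\<in>M. endpts G e \<subseteq> W) \<and> (\<forall>v\<in>W. deg_in M G v = 1)"
proof -
  define edge where "edge v = (SOME e. e \<in> edges G \<and> endpts G e = {v, m v})" for v
  have edge: "edge v \<in> edges G \<and> endpts G (edge v) = {v, m v}" if "v \<in> W" for v
  proof -
    have "adj G v (m v)" using m that unfolding perfect_matching_fun_def by blast
    then show ?thesis unfolding edge_def adj_def by (metis (mono_tags, lifting) someI_ex)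
  qed
  have mW: "m v \<in> W" "m (m v) = v" if "v \<in> W" for v using m that unfolding perfect_matching_fun_def by auto
  define M where "M = edge ` W"
  have "M \<subseteq> edges G" unfolding M_def using edge by blast
  moreover have "\<forall>e\<in>M. endpts G e \<subseteq> W" unfolding M_def using edge mW by auto
  moreover have "deg_in M G v = 1" if v: "v \<in> W" for v
  proof -
    have "{e\<in>M. v \<in> endpts G e} = {edge v}"
    proof (intro set_eqI iffI)
      fix e assume "e \<in> {e\<in>M. v \<in> endpts G e}"
      then obtain w where w: "w \<in> W" "e = edge w" "v \<in> endpts G e" unfolding M_def by blast
      then have "v = w \<or> v = m w" using edge[OF w(1)] by simp
      then have "{v, m v} = {w, m w}" using mW[OF w(1)] by auto
      then show "e \<in> {edge v}" using w by (simp add: edge_def)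
    qed (use edge v in \<open>auto simp: M_def\<close>)
    then show ?thesis unfolding deg_in_def by simp
  qed
  ultimately show ?thesis by blast
qed

lemma contract_simps:
  "verts (contract f G) = f ` verts G"
  "edges (contract f G) = {e\<in>edges G. card (f ` endpts G e) = 2}"
  "endpts (contract f G) = (\<lambda>e. f ` endpts G e)"
  unfolding contract_def verts_def edges_def endpts_def by simp_all

definition lambda_factor :: "('v,'e) mgraph \<Rightarrow> 'e set \<Rightarrow> 'v \<Rightarrow> bool" where
  "lambda_factor G F v \<longleftrightarrow> F \<subseteq> edges G \<and> deg_in F G v = 3 \<and> (\<forall>u\<in>verts G - {v}. deg_in F G u = 1)"

lemma lambda_matchable_iff: "lambda_matchable G v \<longleftrightarrow> v \<in> verts G \<and> (\<exists>F. lambda_factor G F v)"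
  unfolding lambda_matchable_def lambda_factor_def by blast

definition lambda_pair_factor :: "('v,'e) mgraph \<Rightarrow> 'e set \<Rightarrow> 'v \<Rightarrow> 'v \<Rightarrow> bool" where
  "lambda_pair_factor H F a c \<longleftrightarrow> F \<subseteq> edges H \<and> deg_in F H a = 3 \<and> deg_in F H c = 3 \<and>
     (\<forall>x\<in>verts H - {a,c}. deg_in F H x = 1)"

lemma lambda_matchable_pair_iff:
  "lambda_matchable_pair H a c \<longleftrightarrow> a \<in> verts H \<and> c \<in> verts H \<and> a \<noteq> c \<and> (\<exists>F. lambda_pair_factor H F a c)"
  unfolding lambda_matchable_pair_def lambda_pair_factor_def by blast

section \<open>Cubic 3-connected graphs and their barriers\<close>

locale cubic_3conn =
  fixes G :: "('v,'e) mgraph"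
  assumes cubic: "cubic G" and conn: "k_connected 3 G"
begin

lemma mgraph: "mgraph G" using cubic unfolding cubic_def by blast
lemma finite_verts: "finite (verts G)" using mgraph unfolding mgraph_def by blast
lemma finite_edges: "finite (edges G)" using mgraph unfolding mgraph_def by blast
lemma deg_3: "v \<in> verts G \<Longrightarrow> deg_in (edges G) G v = 3" using cubic unfolding cubic_def by blast

lemma finite_cut_edges: "finite (cut_edges G F X)" if "F \<subseteq> edges G"
  using finite_subset[OF _ finite_edges] that unfolding cut_edges_def by auto

lemma three_card_eq_cut_inner:
  assumes "X \<subseteq> verts G"
  shows "3 * card X = card (cut G X) + 2 * card (inner_edges G (edges G) X)"
proof -
  have "finite X" using assms finite_verts finite_subset by blast
  moreover have "(\<Sum>v\<in>X. deg_in (edges G) G v) = 3 * card X" using deg_3 assms by (simp add: subset_iff)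
  ultimately show ?thesis using sum_deg_in_eq_cut_inner[OF mgraph subset_refl] by simp
qed

lemma odd_card_cut:
  assumes "X \<subseteq> verts G" "odd (card X)"
  shows "odd (card (cut G X))"
  using three_card_eq_cut_inner[OF assms(1)] assms(2) by presburger

lemma adj_closed_eq:
  assumes S: "S \<subseteq> verts G" "card S < 3" and X: "X \<subseteq> verts G - S" "x \<in> X"
    and closed: "\<forall>a\<in>X. \<forall>y\<in>verts G - S. adj G a y \<longrightarrow> y \<in> X"
  shows "X = verts G - S"
proof
  let ?W = "verts G - S"
  let ?c = "comp_in (adj G) ?W"
  have "card (components G S) = 1" using conn S unfolding k_connected_def by blast
  then obtain C0 where C0: "comps_in (adj G) ?W = {C0}"
    unfolding components_eq_comps_in by (rule card_1_singletonE)
  have x: "x \<in> ?W" using X by blast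
  have "?c x = comp_in (adj G) X x" by (rule comp_in_closed_subset[OF X(1) subset_refl closed X(2)])
  then have cx: "?c x \<subseteq> X" using comp_in_subset[OF X(2)] by simp
  show "?W \<subseteq> X"
  proof
    fix w assume w: "w \<in> ?W"
    have "?c w = C0" "?c x = C0" using comp_in_mem_comps_in[OF w] comp_in_mem_comps_in[OF x] C0 by auto
    then show "w \<in> X" using comp_in_self[of w "adj G" ?W] cx by auto
  qed
qed (use X in blast)

lemma cut_nonempty:
  assumes D: "D \<subseteq> verts G" "D \<noteq> {}" "verts G - D \<noteq> {}"
  shows "cut G D \<noteq> {}"
proof
  assume empty: "cut G D = {}"
  have "\<forall>a\<in>D. \<forall>y\<in>verts G - {}. adj G a y \<longrightarrow> y \<in> D"
  proof (intro ballI impI)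
    fix a y assume "a \<in> D" "adj G a y"
    then obtain e where e: "e \<in> edges G" "endpts G e = {a,y}" unfolding adj_def by blast
    show "y \<in> D"
    proof (rule ccontr)
      assume "y \<notin> D"
      then have "e \<in> cut G D" using mem_cut_edgesI[OF e] \<open>a \<in> D\<close> by blast
      then show False using empty by blast
    qed
  qed
  moreover obtain x where "x \<in> D" using D(2) by blast
  ultimately have "D = verts G - {}" using adj_closed_eq[of "{}" D x] D(1) by simp
  then show False using D(3) by blast
qed

lemma card_cut_ge_3:
  assumes D: "D \<subseteq> verts G" "D \<noteq> {}" "verts G - D \<noteq> {}" and odd: "odd (card D)"
  shows "card (cut G D) \<ge> 3"
proof (rule ccontr)
  assume "\<not> ?thesis"
  with odd_card_cut[OF D(1) odd] have "card (cut G D) = 1" by presburger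
  then obtain e0 where e0: "cut G D = {e0}" by (meson card_1_singletonE)
  then have "e0 \<in> cut G D" by simp
  then obtain a0 b0 where ab: "endpts G e0 = {a0,b0}" "a0 \<in> D" "b0 \<notin> D" "a0 \<in> verts G" "b0 \<in> verts G"
    by (rule cut_edgeE[OF mgraph])
  show False
  proof (cases "D = {a0}")
    case True
    have "cut G D = {e\<in>edges G. a0 \<in> endpts G e}"
      unfolding cut_edges_def True by (simp add: Int_insert_right) blast
    then have "card (cut G D) = 3" using deg_3[OF ab(4)] unfolding deg_in_def by simp
    then show False using e0 by simp
  next
    case False
    then obtain x where x: "x \<in> D - {a0}" using D(2) by blast
    have closed: "\<forall>a\<in>D - {a0}. \<forall>y\<in>verts G - {a0}. adj G a y \<longrightarrow> y \<in> D - {a0}"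
    proof (intro ballI impI)
      fix a y assume a: "a \<in> D - {a0}" and y: "y \<in> verts G - {a0}" and "adj G a y"
      then obtain e where e: "e \<in> edges G" "endpts G e = {a,y}" unfolding adj_def by blast
      show "y \<in> D - {a0}"
      proof (rule ccontr)
        assume "y \<notin> D - {a0}"
        then have "y \<notin> D" using y by blast
        then have "e \<in> cut G D" using mem_cut_edgesI[OF e] a by blast
        then have "{a,y} = {a0,b0}" using e0 e(2) ab(1) by simp
        then have "a = a0 \<or> a = b0" by (metis doubleton_eq_iff)
        then show False using a ab(3) by blast
      qed
    qed
    have "{a0} \<subseteq> verts G" "D - {a0} \<subseteq> verts G - {a0}" using D(1) ab(4) by auto
    then have "D - {a0} = verts G - {a0}" using adj_closed_eq[OF _ _ _ x closed] by simp
    then show False using D(3) ab(2) by blast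
  qed
qed

lemma card_incident_edges_le:
  assumes "X \<subseteq> verts G"
  shows "card (incident_edges G X) \<le> 3 * card X"
proof -
  have finX: "finite X" using assms finite_verts finite_subset by blast
  have "incident_edges G X = (\<Union>x\<in>X. {e\<in>edges G. x \<in> endpts G e})"
    unfolding incident_edges_def by blast
  then have "card (incident_edges G X) \<le> (\<Sum>x\<in>X. card {e\<in>edges G. x \<in> endpts G e})"
    using card_UN_le[OF finX] by simp
  also have "\<dots> = (\<Sum>x\<in>X. 3)"
  proof (rule sum.cong[OF refl])
    fix x assume "x \<in> X"
    then show "card {e\<in>edges G. x \<in> endpts G e} = 3" using deg_3 assms unfolding deg_in_def by blast
  qed
  finally show ?thesis by simp
qed

end

locale cubic_barrier = cubic_3conn +
  fixes B :: "'v set"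
  assumes barrier: "barrier G B" and B_nonempty: "B \<noteq> {}"
begin

lemma B_subset: "B \<subseteq> verts G" using barrier unfolding barrier_def by blast
lemma finite_B: "finite B" using B_subset finite_verts finite_subset by blast

lemma comp_subset: "C \<in> components G B \<Longrightarrow> C \<subseteq> verts G - B"
  unfolding components_eq_comps_in by (rule comps_in_subset)

lemma comp_nonempty: "C \<in> components G B \<Longrightarrow> C \<noteq> {}"
  unfolding components_eq_comps_in by (rule comps_in_nonempty)

lemma finite_components: "finite (components G B)"
  unfolding components_eq_comps_in using finite_comps_in finite_verts by blast

lemma finite_comp: "C \<in> components G B \<Longrightarrow> finite C"
  using comp_subset finite_verts finite_subset by blast

lemma comp_of_mem: "C \<in> components G B \<Longrightarrow> v \<in> C \<Longrightarrow> comp_of G B v = C"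
  unfolding comp_of_eq_comp_in components_eq_comps_in by (rule comps_in_of_mem[OF symp_adj])

lemma comp_of_mem_components: "v \<in> verts G - B \<Longrightarrow> comp_of G B v \<in> components G B"
  unfolding comp_of_eq_comp_in components_eq_comps_in by (rule comp_in_mem_comps_in)

lemma components_disjoint:
  "C \<in> components G B \<Longrightarrow> D \<in> components G B \<Longrightarrow> C \<noteq> D \<Longrightarrow> C \<inter> D = {}"
  unfolding components_eq_comps_in by (rule comps_in_disjoint[OF symp_adj])

lemma comp_adj_closed:
  assumes "C \<in> components G B" "a \<in> C" "y \<in> verts G" "adj G a y" "y \<notin> C"
  shows "y \<in> B"
  using assms comps_in_closed[OF symp_adj[of G], of C "verts G - B" a y] unfolding components_eq_comps_in
  by blast

lemma cut_compE:
  assumes C: "C \<in> components G B" and e: "e \<in> cut G C"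
  obtains p q where "endpts G e = {p,q}" "p \<in> C" "q \<in> B"
proof -
  obtain p q where pq: "endpts G e = {p,q}" "p \<in> C" "q \<notin> C" "p \<in> verts G" "q \<in> verts G"
    by (rule cut_edgeE[OF mgraph e])
  have "adj G p q" unfolding adj_def using e pq(1) unfolding cut_edges_def by blast
  then show ?thesis using that pq comp_adj_closed[OF C pq(2) pq(5)] by blast
qed

lemma cut_comp_subset_cut_B:
  assumes C: "C \<in> components G B"
  shows "cut G C \<subseteq> cut G B"
proof
  fix e assume e: "e \<in> cut G C"
  then obtain p q where pq: "endpts G e = {p,q}" "p \<in> C" "q \<in> B" by (rule cut_compE[OF C])
  have "p \<notin> B" using comp_subset[OF C] pq(2) by blast
  then show "e \<in> cut G B" using mem_cut_edgesI[of e "edges G" G q p B] e pq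
    unfolding cut_edges_def by (simp add: insert_commute)
qed

lemma cut_comps_disjoint:
  assumes "C \<in> components G B" "D \<in> components G B" "C \<noteq> D"
  shows "cut G C \<inter> cut G D = {}"
  using assms unfolding components_eq_comps_in by (rule cut_comps_in_disjoint[OF mgraph])

lemma cut_B_at_comp:
  assumes e: "e \<in> cut G B" and C: "C \<in> components G B" and v: "v \<in> C" "v \<in> endpts G e"
  shows "e \<in> cut G C"
proof -
  obtain x y where xy: "endpts G e = {x,y}" "x \<in> B" "y \<notin> B" "x \<in> verts G" "y \<in> verts G"
    by (rule cut_edgeE[OF mgraph e])
  have "x \<notin> C" "v = y" using comp_subset[OF C] xy v by auto
  then show ?thesis using mem_cut_edgesI[of e "edges G" G y x C] e xy v
    unfolding cut_edges_def by (simp add: insert_commute)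
qed

lemma cut_B_eq_UN_cut_comps: "cut G B = (\<Union>C\<in>components G B. cut G C)"
proof
  show "cut G B \<subseteq> (\<Union>C\<in>components G B. cut G C)"
  proof
    fix e assume e: "e \<in> cut G B"
    then obtain x y where xy: "endpts G e = {x,y}" "x \<in> B" "y \<notin> B" "x \<in> verts G" "y \<in> verts G"
      by (rule cut_edgeE[OF mgraph])
    have C: "comp_of G B y \<in> components G B" using comp_of_mem_components xy by blast
    then show "e \<in> (\<Union>C\<in>components G B. cut G C)"
      using cut_B_at_comp[OF e C comp_of_self] xy(1) by blast
  qed
qed (use cut_comp_subset_cut_B in blast)

lemma sum_card_cut_comps: "(\<Sum>C\<in>components G B. card (cut G C)) = card (cut G B)"
  unfolding cut_B_eq_UN_cut_comps
proof (rule card_UN_disjoint[symmetric, OF finite_components])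
  show "\<forall>C\<in>components G B. finite (cut G C)" using finite_cut_edges by blast
  show "\<forall>C\<in>components G B. \<forall>D\<in>components G B. C \<noteq> D \<longrightarrow> cut G C \<inter> cut G D = {}"
    using cut_comps_disjoint by blast
qed

lemma card_cut_comp_ge:
  assumes C: "C \<in> components G B"
  shows "card (cut G C) \<ge> 1" and "odd (card C) \<Longrightarrow> card (cut G C) \<ge> 3"
proof -
  have CV: "C \<subseteq> verts G - B" using comp_subset[OF C] .
  then have proper: "C \<subseteq> verts G" "C \<noteq> {}" "verts G - C \<noteq> {}"
    using comp_nonempty[OF C] B_nonempty B_subset by blast+
  have "cut G C \<noteq> {}" using cut_nonempty[OF proper] .
  then show "card (cut G C) \<ge> 1" using finite_cut_edges[of "edges G"] by (simp add: Suc_leI card_gt_0_iff)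
  show "odd (card C) \<Longrightarrow> card (cut G C) \<ge> 3" using card_cut_ge_3[OF proper] .
qed

lemma barrier_structure:
  shows "\<forall>C\<in>components G B. odd (card C)" and "\<forall>C\<in>components G B. card (cut G C) = 3"
    and "inner_edges G (edges G) B = {}" and "card (components G B) = card B"
proof -
  define Odd where "Odd = {C\<in>components G B. odd (card C)}"
  define Even where "Even = components G B - Odd"
  have card_Odd: "card Odd = card B" using barrier unfolding barrier_def odd_components_def Odd_def by simp
  have fin: "finite Odd" "finite Even" unfolding Odd_def Even_def using finite_components by auto
  have split: "components G B = Odd \<union> Even" "Odd \<inter> Even = {}" unfolding Even_def Odd_def by auto
  have ge1: "card (cut G C) \<ge> 1" if "C \<in> Even" for C
    using card_cut_comp_ge(1) that unfolding Even_def by blast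
  have ge3: "card (cut G C) \<ge> 3" if "C \<in> Odd" for C
    using card_cut_comp_ge(2) that unfolding Odd_def by blast
  have "(\<Sum>C\<in>Odd. 3) \<le> (\<Sum>C\<in>Odd. card (cut G C))" by (rule sum_mono) (rule ge3)
  then have s3: "3 * card Odd \<le> (\<Sum>C\<in>Odd. card (cut G C))" by simp
  have "(\<Sum>C\<in>Even. 1) \<le> (\<Sum>C\<in>Even. card (cut G C))" by (rule sum_mono) (rule ge1)
  then have s1: "card Even \<le> (\<Sum>C\<in>Even. card (cut G C))" by simp
  have "card (cut G B) = (\<Sum>C\<in>Odd. card (cut G C)) + (\<Sum>C\<in>Even. card (cut G C))"
    unfolding sum_card_cut_comps[symmetric] split(1) by (rule sum.union_disjoint[OF fin split(2)])
  then have key: "(\<Sum>C\<in>Odd. card (cut G C)) + (\<Sum>C\<in>Even. card (cut G C))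
      + 2 * card (inner_edges G (edges G) B) = 3 * card Odd"
    using three_card_eq_cut_inner[OF B_subset] card_Odd by simp
  then have "card Even = 0" "card (inner_edges G (edges G) B) = 0" using s1 s3 by linarith+
  moreover have "finite (inner_edges G (edges G) B)" using finite_edges unfolding inner_edges_def by simp
  ultimately have Even_empty: "Even = {}" and "inner_edges G (edges G) B = {}" using fin(2) by simp_all
  then show "inner_edges G (edges G) B = {}" by simp
  have A: "components G B = Odd" using split Even_empty by simp
  have "\<forall>C\<in>Odd. odd (card C)" unfolding Odd_def by blast
  then show "\<forall>C\<in>components G B. odd (card C)" using A by simp
  show "card (components G B) = card B" using A card_Odd by simp
  have "\<forall>C\<in>Odd. 3 \<le> card (cut G C)" using ge3 by blast
  moreover have "(\<Sum>C\<in>Odd. card (cut G C)) \<le> 3 * card Odd" using key by linarith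
  ultimately have "\<forall>C\<in>Odd. card (cut G C) = 3" by (rule sum_le_lower_bound_imp_eq[OF fin(1)])
  then show "\<forall>C\<in>components G B. card (cut G C) = 3" using A by simp
qed

lemmas odd_card_comp = barrier_structure(1)
  and card_cut_comp = barrier_structure(2)
  and inner_edges_B_empty = barrier_structure(3)
  and card_components_eq_card_B = barrier_structure(4)

lemma cut_B_at:
  assumes "e \<in> edges G" "v \<in> B" "v \<in> endpts G e"
  shows "e \<in> cut G B"
proof -
  obtain p q where pq: "p \<noteq> q" "endpts G e = {p,q}" by (rule mgraph_edgeE[OF mgraph assms(1)])
  have "\<not> (p \<in> B \<and> q \<in> B)"
  proof
    assume "p \<in> B \<and> q \<in> B"
    then have "card (endpts G e \<inter> B) = 2" using pq card_doubleton_Int_eq_2[OF pq(1), of B] by simp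
    then have "e \<in> inner_edges G (edges G) B" unfolding inner_edges_def using assms(1) by blast
    then show False using inner_edges_B_empty by blast
  qed
  then have "card (endpts G e \<inter> B) = 1" using card_doubleton_Int_eq_1[OF pq(1), of B] pq(2) assms(2,3) by auto
  then show ?thesis unfolding cut_edges_def using assms(1) by blast
qed

definition core_map :: "'v \<Rightarrow> 'v set" where
  "core_map v = (if v \<in> B then {v} else comp_of G B v)"

definition frag_map :: "'v set \<Rightarrow> 'v \<Rightarrow> 'v set" where
  "frag_map J v = (if v \<in> J then {v} else verts G - J)"

lemma core_eq: "core G B = contract core_map G"
  unfolding core_def core_map_def ..

lemma fragment_eq: "fragment G J = contract (frag_map J) G"
  unfolding fragment_def frag_map_def ..

lemma comp_ne_singleton: "C \<in> components G B \<Longrightarrow> v \<in> B \<Longrightarrow> C \<noteq> {v}"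
  using comp_subset by blast

lemma core_map_cut_B:
  assumes "endpts G e = {x,y}" "x \<in> B" "y \<notin> B"
  shows "core_map ` endpts G e = {{x}, comp_of G B y}" "{x} \<noteq> comp_of G B y"
  using assms comp_of_self[of y G B] unfolding core_map_def by auto

lemma edges_core: "edges (core G B) = cut G B"
proof
  show "edges (core G B) \<subseteq> cut G B"
  proof
    fix e assume "e \<in> edges (core G B)"
    then have e: "e \<in> edges G" "card (core_map ` endpts G e) = 2"
      unfolding core_eq contract_simps by auto
    obtain p q where pq: "p \<noteq> q" "endpts G e = {p,q}" "p \<in> verts G" "q \<in> verts G"
      by (rule mgraph_edgeE[OF mgraph e(1)])
    have "p \<in> B \<or> q \<in> B"
    proof (rule ccontr)
      assume "\<not> (p \<in> B \<or> q \<in> B)"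
      then have out: "p \<in> verts G - B" "q \<in> verts G - B" using pq by auto
      have "adj G p q" unfolding adj_def using e(1) pq(2) by blast
      then have "comp_of G B p = comp_of G B q"
        unfolding comp_of_eq_comp_in using comp_in_adj[OF symp_adj[of G] out] by simp
      then have "core_map ` endpts G e = {comp_of G B p}" unfolding core_map_def using pq(2) out by auto
      then show False using e(2) by simp
    qed
    then show "e \<in> cut G B" using cut_B_at[OF e(1)] pq(2) by blast
  qed
next
  show "cut G B \<subseteq> edges (core G B)"
  proof
    fix e assume e: "e \<in> cut G B"
    then obtain x y where xy: "endpts G e = {x,y}" "x \<in> B" "y \<notin> B" "x \<in> verts G" "y \<in> verts G"
      by (rule cut_edgeE[OF mgraph])
    then have "card (core_map ` endpts G e) = 2" using core_map_cut_B[OF xy(1-3)] by simp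
    then show "e \<in> edges (core G B)" using e unfolding core_eq contract_simps cut_edges_def by blast
  qed
qed

lemma deg_core_comp:
  assumes F: "F \<subseteq> cut G B" and C: "C \<in> components G B"
  shows "deg_in F (core G B) C = card (F \<inter> cut G C)"
proof -
  have "C \<in> core_map ` endpts G e \<longleftrightarrow> e \<in> cut G C" if "e \<in> F" for e
  proof -
    have "e \<in> cut G B" using F that by blast
    then obtain x y where xy: "endpts G e = {x,y}" "x \<in> B" "y \<notin> B" "x \<in> verts G" "y \<in> verts G"
      by (rule cut_edgeE[OF mgraph])
    have "C \<noteq> {x}" using comp_ne_singleton[OF C xy(2)] .
    then have "C \<in> core_map ` endpts G e \<longleftrightarrow> C = comp_of G B y" using core_map_cut_B[OF xy(1-3)] by auto
    also have "\<dots> \<longleftrightarrow> y \<in> C" using comp_of_mem[OF C] comp_of_self[of y G B] by auto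
    also have "\<dots> \<longleftrightarrow> e \<in> cut G C"
    proof
      assume "y \<in> C"
      then show "e \<in> cut G C" using cut_B_at_comp[OF \<open>e \<in> cut G B\<close> C] xy(1) by blast
    next
      assume "e \<in> cut G C"
      then obtain p q where pq: "endpts G e = {p,q}" "p \<in> C" "q \<in> B" by (rule cut_compE[OF C])
      then have "p \<notin> B" using comp_subset[OF C] by blast
      then have "p = y" using pq(1) xy(1-3) by (metis doubleton_eq_iff)
      then show "y \<in> C" using pq(2) by simp
    qed
    finally show ?thesis .
  qed
  then have "{e\<in>F. C \<in> endpts (core G B) e} = F \<inter> cut G C" unfolding core_eq contract_simps by auto
  then show ?thesis unfolding deg_in_def by simp
qed

lemma deg_core_singleton:
  assumes F: "F \<subseteq> cut G B" and v: "v \<in> B"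
  shows "deg_in F (core G B) {v} = deg_in F G v"
proof -
  have "{v} \<in> core_map ` endpts G e \<longleftrightarrow> v \<in> endpts G e" if "e \<in> F" for e
  proof -
    have "e \<in> cut G B" using F that by blast
    then obtain x y where xy: "endpts G e = {x,y}" "x \<in> B" "y \<notin> B" "x \<in> verts G" "y \<in> verts G"
      by (rule cut_edgeE[OF mgraph])
    have "comp_of G B y \<noteq> {v}" using comp_of_self[of y G B] xy(3) v by auto
    then show ?thesis using core_map_cut_B[OF xy(1-3)] xy v by auto
  qed
  then have "{e\<in>F. {v} \<in> endpts (core G B) e} = {e\<in>F. v \<in> endpts G e}"
    unfolding core_eq contract_simps by auto
  then show ?thesis unfolding deg_in_def by simp
qed

lemma verts_core_cases:
  assumes "u \<in> verts (core G B)"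
  shows "(\<exists>v\<in>B. u = {v}) \<or> u \<in> components G B"
proof -
  obtain v where v: "v \<in> verts G" "u = core_map v" using assms unfolding core_eq contract_simps by blast
  show ?thesis
  proof (cases "v \<in> B")
    case False
    then show ?thesis using v comp_of_mem_components[of v] unfolding core_map_def by simp
  qed (use v in \<open>auto simp: core_map_def\<close>)
qed

lemma comp_mem_verts_core:
  assumes C: "C \<in> components G B"
  shows "C \<in> verts (core G B)"
proof -
  obtain v where v: "v \<in> C" using comp_nonempty[OF C] by blast
  then have "v \<in> verts G" "core_map v = C"
    using comp_subset[OF C] comp_of_mem[OF C v] unfolding core_map_def by auto
  then show ?thesis unfolding core_eq contract_simps by (intro image_eqI[of _ core_map v]) simp_all
qed

lemma singleton_mem_verts_core:
  assumes "v \<in> B"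
  shows "{v} \<in> verts (core G B)"
proof -
  have "v \<in> verts G" "core_map v = {v}" using assms B_subset unfolding core_map_def by auto
  then show ?thesis unfolding core_eq contract_simps by (intro image_eqI[of _ core_map v]) simp_all
qed

lemma frag_map_card_2:
  assumes "p \<noteq> q"
  shows "card (frag_map J ` {p,q}) = 2 \<longleftrightarrow> p \<in> J \<or> q \<in> J"
proof -
  have ne: "{x} \<noteq> verts G - J" if "x \<in> J" for x using that by blast
  show ?thesis
  proof (cases "p \<in> J"; cases "q \<in> J")
    assume "p \<in> J" "q \<in> J" then show ?thesis using assms unfolding frag_map_def by simp
  next
    assume "p \<in> J" "q \<notin> J" then show ?thesis using ne[of p] unfolding frag_map_def by simp
  next
    assume "p \<notin> J" "q \<in> J" then show ?thesis using ne[of q] unfolding frag_map_def by auto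
  next
    assume "p \<notin> J" "q \<notin> J" then show ?thesis unfolding frag_map_def by simp
  qed
qed

lemma edges_fragment: "edges (fragment G J) = {e\<in>edges G. endpts G e \<inter> J \<noteq> {}}"
proof (intro set_eqI iffI)
  fix e assume "e \<in> edges (fragment G J)"
  then have e: "e \<in> edges G" "card (frag_map J ` endpts G e) = 2" unfolding fragment_eq contract_simps by auto
  obtain p q where pq: "p \<noteq> q" "endpts G e = {p,q}" by (rule mgraph_edgeE[OF mgraph e(1)])
  then show "e \<in> {e\<in>edges G. endpts G e \<inter> J \<noteq> {}}" using e frag_map_card_2[OF pq(1)] by auto
next
  fix e assume e: "e \<in> {e\<in>edges G. endpts G e \<inter> J \<noteq> {}}"
  obtain p q where pq: "p \<noteq> q" "endpts G e = {p,q}" using mgraph_edgeE[OF mgraph] e by blast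
  then show "e \<in> edges (fragment G J)"
    using e frag_map_card_2[OF pq(1)] unfolding fragment_eq contract_simps by auto
qed

lemma deg_fragment_contracted:
  assumes F: "F \<subseteq> edges (fragment G J)"
  shows "deg_in F (fragment G J) (verts G - J) = card (F \<inter> cut G J)"
proof -
  have "verts G - J \<in> frag_map J ` endpts G e \<longleftrightarrow> e \<in> cut G J" if "e \<in> F" for e
  proof -
    have e: "e \<in> edges G" "endpts G e \<inter> J \<noteq> {}" using F that edges_fragment by auto
    obtain p q where pq: "p \<noteq> q" "endpts G e = {p,q}" "p \<in> verts G" "q \<in> verts G"
      by (rule mgraph_edgeE[OF mgraph e(1)])
    have "frag_map J x = verts G - J \<longleftrightarrow> x \<notin> J" if "x \<in> verts G" for x
      unfolding frag_map_def using that by auto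
    then have "verts G - J \<in> frag_map J ` endpts G e \<longleftrightarrow> p \<notin> J \<or> q \<notin> J" using pq by auto
    also have "\<dots> \<longleftrightarrow> card (endpts G e \<inter> J) = 1" using card_doubleton_Int_eq_1[OF pq(1), of J] pq(2) e(2) by auto
    finally show ?thesis unfolding cut_edges_def using e(1) by blast
  qed
  then have "{e\<in>F. verts G - J \<in> endpts (fragment G J) e} = F \<inter> cut G J"
    unfolding fragment_eq contract_simps by auto
  then show ?thesis unfolding deg_in_def by simp
qed

lemma deg_fragment_singleton:
  assumes w: "w \<in> J"
  shows "deg_in F (fragment G J) {w} = deg_in F G w"
proof -
  have fw: "frag_map J x = {w} \<longleftrightarrow> x = w" for x unfolding frag_map_def using w by auto
  have "{w} \<in> frag_map J ` endpts G e \<longleftrightarrow> w \<in> endpts G e" for e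
  proof
    assume "{w} \<in> frag_map J ` endpts G e"
    then obtain x where "x \<in> endpts G e" "frag_map J x = {w}" by blast
    then show "w \<in> endpts G e" using fw by simp
  next
    assume "w \<in> endpts G e"
    then show "{w} \<in> frag_map J ` endpts G e" using fw[of w] by (metis imageI)
  qed
  then have "{e\<in>F. {w} \<in> endpts (fragment G J) e} = {e\<in>F. w \<in> endpts G e}"
    unfolding fragment_eq contract_simps by auto
  then show ?thesis unfolding deg_in_def by simp
qed

lemma verts_fragment_cases: "u \<in> verts (fragment G J) \<Longrightarrow> u = verts G - J \<or> (\<exists>w\<in>J. u = {w})"
  unfolding fragment_eq contract_simps frag_map_def by auto

lemma contracted_mem_verts_fragment:
  assumes "J \<in> components G B"
  shows "verts G - J \<in> verts (fragment G J)"
proof -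
  obtain v where "v \<in> B" using B_nonempty by blast
  then have "v \<in> verts G" "frag_map J v = verts G - J"
    using B_subset comp_subset[OF assms] unfolding frag_map_def by auto
  then show ?thesis unfolding fragment_eq contract_simps by (intro image_eqI[of _ "frag_map J" v]) simp_all
qed

section \<open>Splitting a lambda-factor\<close>

lemma lambda_factor_cut_comp:
  assumes F: "lambda_factor G F b" and b: "b \<in> B" and C: "C \<in> components G B"
  shows "card (F \<inter> cut G C) = 1 \<or> card (F \<inter> cut G C) = 3"
proof -
  have FE: "F \<subseteq> edges G" using F unfolding lambda_factor_def by blast
  have "(\<Sum>v\<in>C. deg_in F G v) = (\<Sum>v\<in>C. 1)"
    using F b comp_subset[OF C] unfolding lambda_factor_def by (intro sum.cong) auto
  then have "card C = card (F \<inter> cut G C) + 2 * card (inner_edges G F C)"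
    using sum_deg_in_eq_cut_inner[OF mgraph FE finite_comp[OF C]] cut_edges_eq_Int[OF FE] by simp
  moreover have "odd (card C)" using odd_card_comp C by blast
  ultimately have "odd (card (F \<inter> cut G C))" by presburger
  moreover have "card (F \<inter> cut G C) \<le> card (cut G C)"
    by (rule card_mono[OF finite_cut_edges]) auto
  then have "card (F \<inter> cut G C) \<le> 3" using card_cut_comp C by simp
  ultimately show ?thesis by presburger
qed

lemma lambda_factor_sum_cut_comps:
  assumes F: "lambda_factor G F b" and b: "b \<in> B"
  shows "(\<Sum>C\<in>components G B. card (F \<inter> cut G C)) = card B + 2"
proof -
  have FE: "F \<subseteq> edges G" using F unfolding lambda_factor_def by blast
  have "(\<Sum>v\<in>B. deg_in F G v) = deg_in F G b + (\<Sum>v\<in>B - {b}. deg_in F G v)"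
    using sum.remove[OF finite_B b] by simp
  also have "(\<Sum>v\<in>B - {b}. deg_in F G v) = (\<Sum>v\<in>B - {b}. 1)"
    using F B_subset unfolding lambda_factor_def by (intro sum.cong) auto
  moreover have "card B > 0" using b finite_B by (auto simp: card_gt_0_iff)
  ultimately have "(\<Sum>v\<in>B. deg_in F G v) = card B + 2"
    using F b unfolding lambda_factor_def by (simp add: card_Diff_singleton)
  moreover have "inner_edges G F B = {}" using FE inner_edges_B_empty unfolding inner_edges_def by blast
  ultimately have "card (F \<inter> cut G B) = card B + 2"
    using sum_deg_in_eq_cut_inner[OF mgraph FE finite_B] cut_edges_eq_Int[OF FE] by simp
  moreover have "F \<inter> cut G B = (\<Union>C\<in>components G B. F \<inter> cut G C)"
    using cut_B_eq_UN_cut_comps by blast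
  moreover have "card (\<Union>C\<in>components G B. F \<inter> cut G C) = (\<Sum>C\<in>components G B. card (F \<inter> cut G C))"
  proof (rule card_UN_disjoint[OF finite_components])
    show "\<forall>C\<in>components G B. finite (F \<inter> cut G C)" using finite_cut_edges[of "edges G"] by blast
    show "\<forall>C\<in>components G B. \<forall>D\<in>components G B. C \<noteq> D \<longrightarrow> F \<inter> cut G C \<inter> (F \<inter> cut G D) = {}"
      using cut_comps_disjoint by blast
  qed
  ultimately show ?thesis by simp
qed

lemma lambda_factor_heavy_comp:
  assumes F: "lambda_factor G F b" and b: "b \<in> B"
  obtains J where "J \<in> components G B" "card (F \<inter> cut G J) = 3"
    "\<forall>C\<in>components G B - {J}. card (F \<inter> cut G C) = 1"
proof -
  let ?f = "\<lambda>C. card (F \<inter> cut G C)"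
  have f13: "?f C = 1 \<or> ?f C = 3" if "C \<in> components G B" for C using lambda_factor_cut_comp[OF F b that] .
  have sum: "(\<Sum>C\<in>components G B. ?f C) = card (components G B) + 2"
    using lambda_factor_sum_cut_comps[OF F b] card_components_eq_card_B by simp
  obtain J where J: "J \<in> components G B" "?f J = 3"
  proof (rule ccontr)
    assume "\<not> thesis"
    then have "\<forall>C\<in>components G B. ?f C = 1" using f13 that by blast
    then show False using sum by simp
  qed
  have "(\<Sum>C\<in>components G B. ?f C) = ?f J + (\<Sum>C\<in>components G B - {J}. ?f C)"
    by (rule sum.remove[OF finite_components J(1)])
  moreover have "card (components G B - {J}) + 1 = card (components G B)"
  proof -
    have "card (components G B) > 0" using J(1) finite_components by (auto simp: card_gt_0_iff)
    then show ?thesis using J(1) by (simp add: card_Diff_singleton)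
  qed
  ultimately have le: "(\<Sum>C\<in>components G B - {J}. ?f C) \<le> 1 * card (components G B - {J})"
    using sum J(2) by linarith
  have ge: "\<forall>C\<in>components G B - {J}. 1 \<le> ?f C"
  proof
    fix C assume "C \<in> components G B - {J}"
    then show "1 \<le> ?f C" using f13[of C] by auto
  qed
  have "\<forall>C\<in>components G B - {J}. ?f C = 1"
    using sum_le_lower_bound_imp_eq[OF _ ge le] finite_components by blast
  then show ?thesis using that J by blast
qed

lemma lambda_matchable_pair_core_of_factor:
  assumes F: "lambda_factor G F b" and b: "b \<in> B" and J: "J \<in> components G B"
    and heavy: "card (F \<inter> cut G J) = 3" and light: "\<forall>C\<in>components G B - {J}. card (F \<inter> cut G C) = 1"
  shows "lambda_matchable_pair (core G B) J {b}"
proof -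
  have FE: "F \<subseteq> edges G" and Fb: "deg_in F G b = 3" and Fu: "\<forall>u\<in>verts G - {b}. deg_in F G u = 1"
    using F unfolding lambda_factor_def by blast+
  define F1 where "F1 = F \<inter> cut G B"
  have F1B: "F1 \<subseteq> cut G B" unfolding F1_def by blast
  have deg_comp: "deg_in F1 (core G B) C = card (F \<inter> cut G C)" if C: "C \<in> components G B" for C
  proof -
    have "F1 \<inter> cut G C = F \<inter> cut G C" using cut_comp_subset_cut_B[OF C] unfolding F1_def by blast
    then show ?thesis using deg_core_comp[OF F1B C] by simp
  qed
  have deg_B: "deg_in F1 (core G B) {v} = deg_in F G v" if v: "v \<in> B" for v
  proof -
    have "e \<in> cut G B" if "e \<in> F" "v \<in> endpts G e" for e using cut_B_at[OF _ v] FE that by blast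
    then have "{e\<in>F1. v \<in> endpts G e} = {e\<in>F. v \<in> endpts G e}" unfolding F1_def by blast
    then show ?thesis using deg_core_singleton[OF F1B v] unfolding deg_in_def by simp
  qed
  have rest: "deg_in F1 (core G B) u = 1" if u: "u \<in> verts (core G B) - {J, {b}}" for u
  proof -
    consider (B) v where "v \<in> B" "u = {v}" | (C) "u \<in> components G B"
      using verts_core_cases u by blast
    then show ?thesis
    proof cases
      case B
      then have "v \<in> verts G - {b}" using u B_subset by blast
      then show ?thesis using deg_B[OF B(1)] Fu B(2) by simp
    next
      case C
      then show ?thesis using deg_comp light u by simp
    qed
  qed
  show ?thesis unfolding lambda_matchable_pair_def
  proof (intro conjI exI)
    show "F1 \<subseteq> edges (core G B)" using F1B edges_core by simp
    show "deg_in F1 (core G B) J = 3" using deg_comp[OF J] heavy by simp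
    show "deg_in F1 (core G B) {b} = 3" using deg_B[OF b] Fb by simp
  qed (use comp_mem_verts_core[OF J] singleton_mem_verts_core[OF b] comp_ne_singleton[OF J b] rest in auto)
qed

lemma lambda_matchable_fragment_of_factor:
  assumes F: "lambda_factor G F b" and b: "b \<in> B" and J: "J \<in> components G B"
    and heavy: "card (F \<inter> cut G J) = 3"
  shows "lambda_matchable (fragment G J) (verts G - J)"
proof -
  have FE: "F \<subseteq> edges G" and Fu: "\<forall>u\<in>verts G - {b}. deg_in F G u = 1"
    using F unfolding lambda_factor_def by blast+
  define F2 where "F2 = {e\<in>F. endpts G e \<inter> J \<noteq> {}}"
  have F2E: "F2 \<subseteq> edges (fragment G J)" unfolding F2_def edges_fragment using FE by blast
  have "endpts G e \<inter> J \<noteq> {}" if "e \<in> cut G J" for e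
    using that unfolding cut_edges_def by (metis (mono_tags, lifting) card.empty mem_Collect_eq zero_neq_one)
  then have "F2 \<inter> cut G J = F \<inter> cut G J" unfolding F2_def by blast
  then have "deg_in F2 (fragment G J) (verts G - J) = 3" using deg_fragment_contracted[OF F2E] heavy by simp
  moreover have "deg_in F2 (fragment G J) u = 1" if u: "u \<in> verts (fragment G J) - {verts G - J}" for u
  proof -
    obtain w where w: "w \<in> J" "u = {w}" using verts_fragment_cases u by blast
    have "{e\<in>F2. w \<in> endpts G e} = {e\<in>F. w \<in> endpts G e}" unfolding F2_def using w by blast
    then have "deg_in F2 G w = deg_in F G w" unfolding deg_in_def by simp
    moreover have "w \<in> verts G - {b}" using w comp_subset[OF J] b by blast
    ultimately show ?thesis using deg_fragment_singleton[OF w(1)] w(2) Fu by simp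
  qed
  ultimately show ?thesis unfolding lambda_matchable_def
    using contracted_mem_verts_fragment[OF J] F2E by blast
qed

lemma lambda_matchable_imp_core_fragment:
  assumes "lambda_matchable G b" and b: "b \<in> B"
  shows "\<exists>J\<in>components G B. lambda_matchable_pair (core G B) J {b} \<and>
    lambda_matchable (fragment G J) (verts G - J)"
proof -
  obtain F where F: "lambda_factor G F b" using assms(1) unfolding lambda_matchable_iff by blast
  obtain J where "J \<in> components G B" "card (F \<inter> cut G J) = 3"
    "\<forall>C\<in>components G B - {J}. card (F \<inter> cut G C) = 1"
    by (rule lambda_factor_heavy_comp[OF F b])
  then show ?thesis using lambda_matchable_pair_core_of_factor[OF F b] lambda_matchable_fragment_of_factor[OF F b] by blast
qed

section \<open>Matchings of a component minus a vertex\<close>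

lemma cut_odd_comp_subset:
  assumes C: "C \<in> components G B" and e0: "endpts G e0 = {u, z}" "u \<in> C" "z \<in> B"
    and D: "D \<in> comps_in (adj G) (C - {u} - T)"
  shows "cut G D \<subseteq> (incident_edges G (insert u T) \<union> cut G C) - {e0}"
proof
  fix e assume e: "e \<in> cut G D"
  have eE: "e \<in> edges G" using e unfolding cut_edges_def by blast
  obtain x y where xy: "endpts G e = {x,y}" "x \<in> D" "y \<notin> D" "x \<in> verts G" "y \<in> verts G"
    by (rule cut_edgeE[OF mgraph e])
  have xW: "x \<in> C - {u} - T" using comps_in_subset[OF D] xy(2) by blast
  have "e \<noteq> e0"
  proof
    assume "e = e0"
    then have "x \<in> {u, z}" using xy(1) e0(1) by auto
    moreover have "z \<notin> C" using comp_subset[OF C] e0(3) by blast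
    ultimately show False using xW by blast
  qed
  moreover have "e \<in> incident_edges G (insert u T) \<union> cut G C"
  proof (cases "y \<in> insert u T")
    case True
    then show ?thesis unfolding incident_edges_def using eE xy(1) by blast
  next
    case False
    show ?thesis
    proof (cases "y \<in> C")
      case True
      then have "y \<in> C - {u} - T" using False by blast
      moreover have "adj G x y" unfolding adj_def using eE xy(1) by blast
      ultimately have "y \<in> D" using comps_in_closed[OF symp_adj D xy(2)] by blast
      then show ?thesis using xy(3) by blast
    next
      case False
      then have "e \<in> cut G C" using mem_cut_edgesI[OF eE xy(1)] xW by blast
      then show ?thesis by blast
    qed
  qed
  ultimately show "e \<in> (incident_edges G (insert u T) \<union> cut G C) - {e0}" by blast
qed

lemma odd_comps_card_comp_minus_le:
  assumes C: "C \<in> components G B" and e0: "e0 \<in> cut G C" "endpts G e0 = {u, z}" "u \<in> C" "z \<in> B"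
    and T: "T \<subseteq> C - {u}"
  shows "odd_comps_card (adj G) (C - {u} - T) \<le> card T + 1"
proof -
  let ?W = "C - {u} - T"
  let ?Q = "{D \<in> comps_in (adj G) ?W. odd (card D)}"
  have CV: "C \<subseteq> verts G" using comp_subset[OF C] by blast
  have "finite (comps_in (adj G) ?W)" using finite_comp[OF C] by (simp add: finite_comps_in)
  then have finQ: "finite ?Q" by simp
  have "card (cut G D) \<ge> 3" if D: "D \<in> ?Q" for D
  proof (rule card_cut_ge_3)
    have "D \<subseteq> ?W" using D comps_in_subset by blast
    then show "D \<subseteq> verts G" "verts G - D \<noteq> {}" using CV e0(3) by blast+
  qed (use D comps_in_nonempty in blast)+
  then have "3 * card ?Q \<le> (\<Sum>D\<in>?Q. card (cut G D))"
    using sum_mono[of ?Q "\<lambda>_. 3" "\<lambda>D. card (cut G D)"] by simp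
  also have "\<dots> = card (\<Union>D\<in>?Q. cut G D)"
  proof (rule card_UN_disjoint[symmetric, OF finQ])
    show "\<forall>D\<in>?Q. finite (cut G D)" using finite_cut_edges[of "edges G"] by blast
    show "\<forall>D\<in>?Q. \<forall>D'\<in>?Q. D \<noteq> D' \<longrightarrow> cut G D \<inter> cut G D' = {}"
      using cut_comps_in_disjoint[OF mgraph] by blast
  qed
  also have "\<dots> \<le> card ((incident_edges G (insert u T) \<union> cut G C) - {e0})"
  proof (rule card_mono)
    show "finite ((incident_edges G (insert u T) \<union> cut G C) - {e0})"
      using finite_edges unfolding incident_edges_def cut_edges_def by simp
    show "(\<Union>D\<in>?Q. cut G D) \<subseteq> (incident_edges G (insert u T) \<union> cut G C) - {e0}"
      using cut_odd_comp_subset[OF C e0(2-4)] by blast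
  qed
  also have "\<dots> = card (incident_edges G (insert u T) \<union> cut G C) - 1"
    using e0(1) by (simp add: card_Diff_singleton)
  also have "\<dots> \<le> card (incident_edges G (insert u T)) + card (cut G C) - 1"
    using card_Un_le[of "incident_edges G (insert u T)" "cut G C"] by simp
  also have "\<dots> \<le> 3 * card (insert u T) + 3 - 1"
    using card_incident_edges_le[of "insert u T"] card_cut_comp C T CV e0(3) by auto
  also have "\<dots> \<le> 3 * card T + 5"
    using card_insert_le[of T u] finite_subset[OF T] finite_comp[OF C] by (simp add: card_insert_if)
  finally show ?thesis unfolding odd_comps_card_def by linarith
qed

lemma comp_minus_cut_end_tutte:
  assumes C: "C \<in> components G B" and e0: "e0 \<in> cut G C" "endpts G e0 = {u, z}" "u \<in> C" "z \<in> B"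
  shows "tutte_condition (adj G) (C - {u})"
  unfolding tutte_condition_def
proof (intro allI impI)
  fix T assume T: "T \<subseteq> C - {u}"
  have finC: "finite C" using finite_comp[OF C] .
  have finT: "finite T" using T finC finite_subset by blast
  have "card (C - {u} - T) = card (C - {u}) - card T" using card_Diff_subset[OF finT T] .
  moreover have "card (C - {u}) = card C - 1" using e0(3) by (simp add: card_Diff_singleton)
  moreover have "card T \<le> card (C - {u})" using card_mono[OF _ T] finC by simp
  moreover have "card C > 0" using e0(3) finC by (auto simp: card_gt_0_iff)
  ultimately have card_rest: "card (C - {u} - T) + card T + 1 = card C" by simp
  have "finite (C - {u} - T)" using finC by simp
  then have parity: "even (odd_comps_card (adj G) (C - {u} - T) + card (C - {u} - T))"
    by (rule even_odd_comps_card_plus_card[OF symp_adj])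
  have "odd_comps_card (adj G) (C - {u} - T) \<noteq> card T + 1"
  proof
    assume "odd_comps_card (adj G) (C - {u} - T) = card T + 1"
    then have "even (card C)" using parity card_rest by (metis add.commute add.left_commute)
    then show False using odd_card_comp C by blast
  qed
  then show "odd_comps_card (adj G) (C - {u} - T) \<le> card T"
    using odd_comps_card_comp_minus_le[OF C e0 T] by linarith
qed

lemma comp_minus_cut_end_matching:
  assumes C: "C \<in> components G B" and e0: "e0 \<in> cut G C" "endpts G e0 = {u, z}" "u \<in> C" "z \<in> B"
  shows "\<exists>M\<subseteq>edges G. (\<forall>e\<in>M. endpts G e \<subseteq> C - {u}) \<and> (\<forall>v\<in>C - {u}. deg_in M G v = 1)"
proof -
  have "finite (C - {u})" using finite_comp[OF C] by simp
  then obtain m where "perfect_matching_fun (adj G) (C - {u}) m"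
    using tutte[OF symp_adj _ comp_minus_cut_end_tutte[OF C e0]] by blast
  then show ?thesis by (rule perfect_matching_fun_edges[OF mgraph])
qed

section \<open>Gluing factors of the core and of a fragment\<close>

lemma full_cut_comp:
  assumes "C \<in> components G B" "card (F \<inter> cut G C) = 3"
  shows "cut G C \<subseteq> F"
proof -
  have "F \<inter> cut G C = cut G C"
    using card_subset_eq[OF finite_cut_edges[of "edges G"], of "F \<inter> cut G C"] assms card_cut_comp by simp
  then show ?thesis by blast
qed

lemma pair_factor_cut_comps:
  assumes F1: "lambda_pair_factor (core G B) F1 J {b}" and J: "J \<in> components G B" and b: "b \<in> B"
  shows "cut G J \<subseteq> F1" and "\<And>C. C \<in> components G B - {J} \<Longrightarrow> card (F1 \<inter> cut G C) = 1"
proof -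
  have F1B: "F1 \<subseteq> cut G B" using F1 edges_core unfolding lambda_pair_factor_def by simp
  have "card (F1 \<inter> cut G J) = 3"
    using deg_core_comp[OF F1B J] F1 unfolding lambda_pair_factor_def by simp
  then show "cut G J \<subseteq> F1" by (rule full_cut_comp[OF J])
  fix C assume C: "C \<in> components G B - {J}"
  then have "C \<in> verts (core G B) - {J, {b}}"
    using comp_mem_verts_core comp_ne_singleton[OF _ b] by blast
  then have "deg_in F1 (core G B) C = 1" using F1 unfolding lambda_pair_factor_def by blast
  then show "card (F1 \<inter> cut G C) = 1" using deg_core_comp[OF F1B] C by simp
qed

lemma fragment_factor_cut:
  assumes F2: "lambda_factor (fragment G J) F2 (verts G - J)" and J: "J \<in> components G B"
  shows "cut G J \<subseteq> F2"
proof (rule full_cut_comp[OF J])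
  show "card (F2 \<inter> cut G J) = 3"
    using deg_fragment_contracted[of F2 J] F2 unfolding lambda_factor_def by simp
qed

end

locale lambda_gluing = cubic_barrier G B for G :: "('v,'e) mgraph" and B :: "'v set" +
  fixes b :: 'v and J :: "'v set" and F1 F2 :: "'e set"
    and u :: "'v set \<Rightarrow> 'v" and M :: "'v set \<Rightarrow> 'e set"
  assumes b: "b \<in> B" and J: "J \<in> components G B"
    and F1: "lambda_pair_factor (core G B) F1 J {b}"
    and F2: "lambda_factor (fragment G J) F2 (verts G - J)"
    and u: "\<And>C. C \<in> components G B - {J} \<Longrightarrow> u C \<in> C \<and> (\<forall>e\<in>F1 \<inter> cut G C. \<exists>z\<in>B. endpts G e = {u C, z})"
    and M: "\<And>C. C \<in> components G B - {J} \<Longrightarrow>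
      M C \<subseteq> edges G \<and> (\<forall>e\<in>M C. endpts G e \<subseteq> C - {u C}) \<and> (\<forall>v\<in>C - {u C}. deg_in (M C) G v = 1)"
begin

definition glued :: "'e set" where
  "glued = F1 \<union> F2 \<union> (\<Union>C\<in>components G B - {J}. M C)"

lemma F1_subset: "F1 \<subseteq> cut G B"
  using F1 edges_core unfolding lambda_pair_factor_def by simp

lemma F2_subset: "F2 \<subseteq> {e\<in>edges G. endpts G e \<inter> J \<noteq> {}}"
  using F2 edges_fragment unfolding lambda_factor_def by simp

lemma glued_subset: "glued \<subseteq> edges G"
  using F1_subset F2_subset M unfolding glued_def cut_edges_def by blast

lemma F2_edge_outside_J:
  assumes "e \<in> F2" "v \<in> endpts G e" "v \<notin> J"
  shows "v \<in> B" and "e \<in> F1"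
proof -
  have e: "e \<in> edges G" and "endpts G e \<inter> J \<noteq> {}" using F2_subset assms(1) by auto
  then obtain w where w: "w \<in> J" "w \<in> endpts G e" by blast
  obtain p q where pq: "p \<noteq> q" "endpts G e = {p,q}" "p \<in> verts G" "q \<in> verts G"
    by (rule mgraph_edgeE[OF mgraph e])
  have ewv: "endpts G e = {w, v}" using pq w assms(2,3) by auto
  then have "e \<in> cut G J" using mem_cut_edgesI[OF e _ w(1) assms(3)] by blast
  then show "e \<in> F1" using pair_factor_cut_comps(1)[OF F1 J b] by blast
  have "v \<in> verts G" using pq assms(2) by auto
  moreover have "adj G w v" unfolding adj_def using e ewv by blast
  ultimately show "v \<in> B" using comp_adj_closed[OF J w(1)] assms(3) by blast
qed

lemma deg_glued_B:
  assumes v: "v \<in> B"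
  shows "deg_in glued G v = deg_in F1 G v"
proof -
  have "e \<in> F1" if e: "e \<in> glued" and ve: "v \<in> endpts G e" for e
  proof -
    consider "e \<in> F1" | "e \<in> F2" | C where "C \<in> components G B - {J}" "e \<in> M C"
      using e unfolding glued_def by blast
    then show ?thesis
    proof cases
      case 2
      moreover have "v \<notin> J" using comp_subset[OF J] v by blast
      ultimately show ?thesis using F2_edge_outside_J(2) ve by blast
    next
      case (3 C)
      then have "v \<in> C" using M[OF 3(1)] ve by blast
      then show ?thesis using comp_subset 3(1) v by blast
    qed
  qed
  then have "{e\<in>glued. v \<in> endpts G e} = {e\<in>F1. v \<in> endpts G e}" unfolding glued_def by blast
  then show ?thesis unfolding deg_in_def by simp
qed

lemma deg_glued_J:
  assumes v: "v \<in> J"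
  shows "deg_in glued G v = deg_in F2 G v"
proof -
  have "e \<in> F2" if e: "e \<in> glued" and ve: "v \<in> endpts G e" for e
  proof -
    consider "e \<in> F1" | "e \<in> F2" | C where "C \<in> components G B - {J}" "e \<in> M C"
      using e unfolding glued_def by blast
    then show ?thesis
    proof cases
      case 1
      then have "e \<in> cut G J" using cut_B_at_comp[OF _ J v ve] F1_subset by blast
      then show ?thesis using fragment_factor_cut[OF F2 J] by blast
    next
      case (3 C)
      then have "v \<in> C" using M[OF 3(1)] ve by blast
      then show ?thesis using components_disjoint[OF _ J] 3(1) v by blast
    qed
  qed
  then have "{e\<in>glued. v \<in> endpts G e} = {e\<in>F2. v \<in> endpts G e}" unfolding glued_def by blast
  then show ?thesis unfolding deg_in_def by simp
qed

lemma deg_glued_comp: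
  assumes C: "C \<in> components G B - {J}" and v: "v \<in> C"
  shows "deg_in glued G v = (if v = u C then card (F1 \<inter> cut G C) else deg_in (M C) G v)"
proof -
  have vB: "v \<notin> B" using comp_subset C v by blast
  have F1_at_v: "{e\<in>F1. v \<in> endpts G e} = (if v = u C then F1 \<inter> cut G C else {})"
  proof -
    have "e \<in> cut G C" if "e \<in> F1" "v \<in> endpts G e" for e
      using cut_B_at_comp[of e C v] F1_subset that C v by blast
    moreover have "v \<in> endpts G e \<longleftrightarrow> v = u C" if "e \<in> F1 \<inter> cut G C" for e
      using u[OF C] that vB by fastforce
    ultimately show ?thesis by auto
  qed
  have "e \<in> F1 \<or> e \<in> M C" if e: "e \<in> glued" and ve: "v \<in> endpts G e" for e
  proof -
    consider "e \<in> F1" | "e \<in> F2" | C' where "C' \<in> components G B - {J}" "e \<in> M C'"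
      using e unfolding glued_def by blast
    then show ?thesis
    proof cases
      case 2
      moreover have "v \<notin> J" using components_disjoint[OF _ J] C v by blast
      ultimately show ?thesis using F2_edge_outside_J(1) ve vB by blast
    next
      case (3 C')
      then have "v \<in> C'" using M[OF 3(1)] ve by blast
      then have "C' = C" using components_disjoint 3(1) C v by blast
      then show ?thesis using 3(2) by blast
    qed simp
  qed
  then have at_v: "{e\<in>glued. v \<in> endpts G e} = {e\<in>F1. v \<in> endpts G e} \<union> {e\<in>M C. v \<in> endpts G e}"
    using C unfolding glued_def by blast
  show ?thesis
  proof (cases "v = u C")
    case True
    have "{e\<in>M C. v \<in> endpts G e} = {}" using M[OF C] True by blast
    then have "{e\<in>glued. v \<in> endpts G e} = F1 \<inter> cut G C"
      using at_v F1_at_v by (simp only: if_P[OF True] Un_empty_right)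
    then show ?thesis using True unfolding deg_in_def by simp
  next
    case False
    then show ?thesis using at_v F1_at_v unfolding deg_in_def by simp
  qed
qed

lemma deg_glued_outside_B:
  assumes v: "v \<in> verts G - B"
  shows "deg_in glued G v = 1"
proof -
  define C where "C = comp_of G B v"
  have CA: "C \<in> components G B" unfolding C_def using v by (rule comp_of_mem_components)
  have vC: "v \<in> C" unfolding C_def by (rule comp_of_self)
  show ?thesis
  proof (cases "C = J")
    case True
    then have vJ: "v \<in> J" using vC by simp
    have "frag_map J v = {v}" using vJ unfolding frag_map_def by simp
    then have "{v} \<in> verts (fragment G J)"
      using v unfolding fragment_eq contract_simps by (intro image_eqI[of _ "frag_map J" v]) auto
    moreover have "{v} \<noteq> verts G - J" using vJ by blast
    ultimately have "deg_in F2 (fragment G J) {v} = 1" using F2 unfolding lambda_factor_def by blast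
    then show ?thesis using deg_glued_J[OF vJ] deg_fragment_singleton[OF vJ] by simp
  next
    case False
    then have C: "C \<in> components G B - {J}" using CA by blast
    show ?thesis
    proof (cases "v = u C")
      case True
      then show ?thesis using deg_glued_comp[OF C vC] pair_factor_cut_comps(2)[OF F1 J b C] by simp
    next
      case False
      then have "v \<in> C - {u C}" using vC by blast
      then show ?thesis using deg_glued_comp[OF C vC] M[OF C] False by simp
    qed
  qed
qed

lemma lambda_factor_glued: "lambda_factor G glued b"
  unfolding lambda_factor_def
proof (intro conjI ballI)
  have F1B: "F1 \<subseteq> cut G B" by (rule F1_subset)
  have F1_deg: "deg_in F1 (core G B) {b} = 3" "\<forall>x\<in>verts (core G B) - {J, {b}}. deg_in F1 (core G B) x = 1"
    using F1 unfolding lambda_pair_factor_def by blast+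
  show "glued \<subseteq> edges G" by (rule glued_subset)
  show "deg_in glued G b = 3" using deg_glued_B[OF b] deg_core_singleton[OF F1B b] F1_deg(1) by simp
  fix v assume v: "v \<in> verts G - {b}"
  show "deg_in glued G v = 1"
  proof (cases "v \<in> B")
    case True
    have "{v} \<noteq> J" "{v} \<noteq> {b}" using comp_ne_singleton[OF J True] v by auto
    then have "{v} \<in> verts (core G B) - {J, {b}}" using singleton_mem_verts_core[OF True] by blast
    then show ?thesis using deg_glued_B[OF True] deg_core_singleton[OF F1B True] F1_deg(2) by simp
  next
    case False
    then show ?thesis using deg_glued_outside_B v by blast
  qed
qed

end

context cubic_barrier
begin

lemma comp_matching_at_pair_factor_end:
  assumes F1: "lambda_pair_factor (core G B) F1 J {b}" and J: "J \<in> components G B" and b: "b \<in> B"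
    and C: "C \<in> components G B - {J}"
  obtains x N where "x \<in> C" "\<forall>e\<in>F1 \<inter> cut G C. \<exists>z\<in>B. endpts G e = {x, z}"
    "N \<subseteq> edges G" "\<forall>e\<in>N. endpts G e \<subseteq> C - {x}" "\<forall>v\<in>C - {x}. deg_in N G v = 1"
proof -
  have CA: "C \<in> components G B" using C by blast
  obtain e1 where e1: "F1 \<inter> cut G C = {e1}"
    using pair_factor_cut_comps(2)[OF F1 J b C] by (meson card_1_singletonE)
  then have e1C: "e1 \<in> cut G C" by blast
  then obtain p q where pq: "endpts G e1 = {p,q}" "p \<in> C" "q \<in> B" by (rule cut_compE[OF CA])
  have "\<forall>e\<in>F1 \<inter> cut G C. \<exists>z\<in>B. endpts G e = {p, z}"
  proof
    fix e assume "e \<in> F1 \<inter> cut G C"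
    then have "e = e1" using e1 by blast
    then show "\<exists>z\<in>B. endpts G e = {p, z}" using pq(1,3) by blast
  qed
  moreover obtain N where "N \<subseteq> edges G" "\<forall>e\<in>N. endpts G e \<subseteq> C - {p}" "\<forall>v\<in>C - {p}. deg_in N G v = 1"
    using comp_minus_cut_end_matching[OF CA e1C pq(1-3)] by blast
  ultimately show ?thesis using that pq(2) by blast
qed

lemma core_fragment_imp_lambda_matchable:
  assumes b: "b \<in> B" and J: "J \<in> components G B"
    and pair: "lambda_matchable_pair (core G B) J {b}"
    and frag: "lambda_matchable (fragment G J) (verts G - J)"
  shows "lambda_matchable G b"
proof -
  obtain F1 where F1: "lambda_pair_factor (core G B) F1 J {b}"
    using pair unfolding lambda_matchable_pair_iff by blast
  obtain F2 where F2: "lambda_factor (fragment G J) F2 (verts G - J)"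
    using frag unfolding lambda_matchable_iff by blast
  define P where "P C x N \<longleftrightarrow> x \<in> C \<and> (\<forall>e\<in>F1 \<inter> cut G C. \<exists>z\<in>B. endpts G e = {x, z}) \<and>
      N \<subseteq> edges G \<and> (\<forall>e\<in>N. endpts G e \<subseteq> C - {x}) \<and> (\<forall>v\<in>C - {x}. deg_in N G v = 1)"
    for C x N
  have "\<forall>C\<in>components G B - {J}. \<exists>x N. P C x N"
    unfolding P_def using comp_matching_at_pair_factor_end[OF F1 J b] by metis
  then obtain u where "\<forall>C\<in>components G B - {J}. \<exists>N. P C (u C) N" by (rule bchoice[elim_format]) blast
  then obtain M where PM: "\<forall>C\<in>components G B - {J}. P C (u C) (M C)" by (rule bchoice[elim_format]) blast
  have "lambda_gluing_axioms G B b J F1 F2 u M"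
  proof (rule lambda_gluing_axioms.intro)
    fix C assume "C \<in> components G B - {J}"
    then have "P C (u C) (M C)" using PM by blast
    then show "u C \<in> C \<and> (\<forall>e\<in>F1 \<inter> cut G C. \<exists>z\<in>B. endpts G e = {u C, z})"
      "M C \<subseteq> edges G \<and> (\<forall>e\<in>M C. endpts G e \<subseteq> C - {u C}) \<and> (\<forall>v\<in>C - {u C}. deg_in (M C) G v = 1)"
      unfolding P_def by blast+
  qed (fact b J F1 F2)+
  then interpret lambda_gluing G B b J F1 F2 u M
    by (intro lambda_gluing.intro cubic_barrier_axioms)
  show ?thesis unfolding lambda_matchable_iff using lambda_factor_glued b B_subset by blast
qed

end

theorem lemma3p5:
  fixes G :: "('v,'e) mgraph" and B :: "'v set" and b :: 'v
  assumes "cubic G" and "k_connected 3 G" and "barrier G B" and "B \<noteq> {}" and "b \<in> B"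
  shows "lambda_matchable G b \<longleftrightarrow>
    (\<exists>J \<in> components G B.
        lambda_matchable_pair (core G B) J {b} \<and>
        lambda_matchable (fragment G J) (verts G - J))"
proof -
  interpret cubic_barrier G B
    using assms(1-4) by (intro cubic_barrier.intro cubic_barrier_axioms.intro cubic_3conn.intro)
  show ?thesis
    using lambda_matchable_imp_core_fragment[OF _ assms(5)] core_fragment_imp_lambda_matchable[OF assms(5)]
    by blast
qed

end
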